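(* Assume $d_k=\max_{\alpha\in\mathbb R^k,\beta\in\mathbb R^m_+}f(\alpha,\beta)$ is finite. Let $(\kappa_t)_{t\ge1}$ be positive step sizes with $\lim_{t\to\infty}\kappa_t=0$ and $\sum_t\kappa_t=\infty$, and consider the iteration started from any $\alpha_0\in\mathbb R^k$, $\beta_0\in\mathbb R^m_+$, $z_0=\mathds 1_n(\mathcal J(\alpha_0,\beta_0))$: $$\alpha_{t+1}=(1-\tfrac12\kappa_t)\alpha_t-\tfrac12\eta\kappa_t\sqrt\Lambda V^\top\mathrm{diag}(z_t)(c+V\sqrt\Lambda\alpha_t+A^\top\beta_t),$$ $$\beta_{t+1}=\max\Big\{0,\ \beta_t-\kappa_t b-\tfrac12\eta\kappa_t A\,\mathrm{diag}(z_t)(c+V\sqrt\Lambda\alpha_t+A^\top\beta_t)\Big\}\ \text{(componentwise max)},$$ $$z_{t+1}=\mathds 1_n(\mathcal J(\alpha_{t+1},\beta_{t+1})).$$ Then $\lim_{t\to\infty}f(\alpha_t,\beta_t)=d_k$. Moreover, if $z_t$ converges (i.e. is eventually constant) to some $z^\star$, then $z^\star$ is an optimal solution of $\min_{z\in\mathcal Z_s}\max_{\alpha\in\mathbb R^k,\beta\in\mathbb R^m_+}L(z,\alpha,\beta)$ and $d_k=J^\star_k$ (zero duality gap).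
   Context: Let $Q\in\mathbb R^{n\times n}$ be symmetric positive semidefinite with eigendecomposition $Q=\sum_{i=1}^n\lambda_i v_iv_i^\top$, $\lambda_1\ge\cdots\ge\lambda_n\ge0$, $\{v_i\}$ orthonormal. Let $c\in\mathbb R^n$, $A\in\mathbb R^{m\times n}$, $b\in\mathbb R^m$, $\eta>0$, $s\le n$ a positive integer, $k\le n$, $V=[v_1,\dots,v_k]$, $\Lambda=\mathrm{diag}(\lambda_1,\dots,\lambda_k)$. Let $\mathcal Z_s=\{z\in\{0,1\}^n:\sum_j z_j\le s\}$ and $$L(z,\alpha,\beta)=-\beta^\top b-\tfrac14\|\alpha\|_2^2-\tfrac{\eta}{4}(c+V\sqrt\Lambda\alpha+A^\top\beta)^\top\mathrm{diag}(z)(c+V\sqrt\Lambda\alpha+A^\top\beta),$$ $f(\alpha,\beta)=\min_{z\in\mathcal Z_s}L(z,\alpha,\beta)$, and $J^\star_k=\min_{z\in\mathcal Z_s}\max_{\alpha\in\mathbb R^k,\beta\in\mathbb R^m_+}L(z,\alpha,\beta)$ (equivalently the optimal value of $\min\ \langle c,x\rangle+\sum_{i\le k}\lambda_i\langle v_i,x\rangle^2+\eta^{-1}\|x\|_2^2$ s.t. $Ax\le b$, $\|x\|_0\le s$). For $(\alpha,\beta)$, let $\gamma=c+V\sqrt\Lambda\alpha+A^\top\beta$ and let $\mathcal J(\alpha,\beta)\subseteq[n]$ be the set of $s$ indices with the $s$ largest values of $|\gamma_j|$, ties broken by a fixed deterministic rule; $\mathds 1_n(\mathcal J)$ is its indicator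 vector. *)

theory Defs
  imports "HOL-Analysis.Analysis" "HOL-Library.Extended_Real"
begin

(* Conventions: all vectors/matrices are nat-indexed functions, 0-based.
   Vectors in R^n: nat => real, only components < n are meaningful.
   Eigenvector v_i (i < n) has components  v i j  (j < n).
   A :: m x n matrix, entry  A i j  (i < m, j < n).
   alpha in R^k uses components < k, beta in R^m uses components < m.
   z in {0,1}^n is represented as nat => real vanishing outside {..<n}. *)

definition gam :: "nat \<Rightarrow> nat \<Rightarrow> (nat \<Rightarrow> real) \<Rightarrow> (nat \<Rightarrow> nat \<Rightarrow> real)
    \<Rightarrow> (nat \<Rightarrow> nat \<Rightarrow> real) \<Rightarrow> (nat \<Rightarrow> real)
    \<Rightarrow> (nat \<Rightarrow> real) \<Rightarrow> (nat \<Rightarrow> real) \<Rightarrow> nat \<Rightarrow> real" where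
  "gam k m lam v A c \<alpha> \<beta> j =
     c j + (\<Sum>i<k. v i j * sqrt (lam i) * \<alpha> i) + (\<Sum>i<m. A i j * \<beta> i)"

definition Zs :: "nat \<Rightarrow> nat \<Rightarrow> (nat \<Rightarrow> real) set" where
  "Zs n s = {z. (\<forall>j. z j \<in> {0, 1}) \<and> (\<forall>j\<ge>n. z j = 0) \<and> (\<Sum>j<n. z j) \<le> real s}"

definition Lfun :: "nat \<Rightarrow> nat \<Rightarrow> nat \<Rightarrow> (nat \<Rightarrow> real) \<Rightarrow> (nat \<Rightarrow> nat \<Rightarrow> real)
    \<Rightarrow> (nat \<Rightarrow> nat \<Rightarrow> real) \<Rightarrow> (nat \<Rightarrow> real) \<Rightarrow> (nat \<Rightarrow> real) \<Rightarrow> real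
    \<Rightarrow> (nat \<Rightarrow> real) \<Rightarrow> (nat \<Rightarrow> real) \<Rightarrow> (nat \<Rightarrow> real) \<Rightarrow> real" where
  "Lfun n m k lam v A b c \<eta> z \<alpha> \<beta> =
     - (\<Sum>i<m. \<beta> i * b i) - (\<Sum>i<k. (\<alpha> i)\<^sup>2) / 4
     - \<eta> / 4 * (\<Sum>j<n. z j * (gam k m lam v A c \<alpha> \<beta> j)\<^sup>2)"

definition dual_feas :: "nat \<Rightarrow> ((nat \<Rightarrow> real) \<times> (nat \<Rightarrow> real)) set" where
  "dual_feas m = {(\<alpha>, \<beta>). \<forall>i<m. 0 \<le> \<beta> i}"

definition fdual :: "nat \<Rightarrow> nat \<Rightarrow> nat \<Rightarrow> nat \<Rightarrow> (nat \<Rightarrow> real) \<Rightarrow> (nat \<Rightarrow> nat \<Rightarrow> real)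
    \<Rightarrow> (nat \<Rightarrow> nat \<Rightarrow> real) \<Rightarrow> (nat \<Rightarrow> real) \<Rightarrow> (nat \<Rightarrow> real) \<Rightarrow> real
    \<Rightarrow> (nat \<Rightarrow> real) \<Rightarrow> (nat \<Rightarrow> real) \<Rightarrow> real" where
  "fdual n m k s lam v A b c \<eta> \<alpha> \<beta> =
     Min ((\<lambda>z. Lfun n m k lam v A b c \<eta> z \<alpha> \<beta>) ` Zs n s)"

text \<open>d_k = max over dual feasible (alpha, beta) of f (as a supremum; attainment is assumed
  separately in the theorem)\<close>
definition dval :: "nat \<Rightarrow> nat \<Rightarrow> nat \<Rightarrow> nat \<Rightarrow> (nat \<Rightarrow> real) \<Rightarrow> (nat \<Rightarrow> nat \<Rightarrow> real)
    \<Rightarrow> (nat \<Rightarrow> nat \<Rightarrow> real) \<Rightarrow> (nat \<Rightarrow> real) \<Rightarrow> (nat \<Rightarrow> real) \<Rightarrow> real \<Rightarrow> real" where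
  "dval n m k s lam v A b c \<eta> =
     (SUP p\<in>dual_feas m. fdual n m k s lam v A b c \<eta> (fst p) (snd p))"

text \<open>Inner value max over (alpha, beta) of L(z, alpha, beta), in the extended reals
  (it may be +infinity)\<close>
definition inner_val :: "nat \<Rightarrow> nat \<Rightarrow> nat \<Rightarrow> (nat \<Rightarrow> real) \<Rightarrow> (nat \<Rightarrow> nat \<Rightarrow> real)
    \<Rightarrow> (nat \<Rightarrow> nat \<Rightarrow> real) \<Rightarrow> (nat \<Rightarrow> real) \<Rightarrow> (nat \<Rightarrow> real) \<Rightarrow> real
    \<Rightarrow> (nat \<Rightarrow> real) \<Rightarrow> ereal" where
  "inner_val n m k lam v A b c \<eta> z =
     (SUP p\<in>dual_feas m. ereal (Lfun n m k lam v A b c \<eta> z (fst p) (snd p)))"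

definition Jstar :: "nat \<Rightarrow> nat \<Rightarrow> nat \<Rightarrow> nat \<Rightarrow> (nat \<Rightarrow> real) \<Rightarrow> (nat \<Rightarrow> nat \<Rightarrow> real)
    \<Rightarrow> (nat \<Rightarrow> nat \<Rightarrow> real) \<Rightarrow> (nat \<Rightarrow> real) \<Rightarrow> (nat \<Rightarrow> real) \<Rightarrow> real \<Rightarrow> ereal" where
  "Jstar n m k s lam v A b c \<eta> =
     (INF z\<in>Zs n s. inner_val n m k lam v A b c \<eta> z)"

end

theory Submission
  imports Defs
begin

(* The dual function f = min over z of L(z,.) is concave, and the iteration is projected gradient
   ascent on L(z_t,.), where the top-s pattern z_t attains the minimum defining f. Each L(z,.) is a
   concave quadratic with Lipschitz gradient, so one step decreases the squared distance to any
   dual-feasible point y by 2 kappa_t (L(z_t,y) - f(alpha_t,beta_t)), up to an error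
   2 kappa_t^2 |grad L(z_t,.)|^2 taken at y rather than at the possibly unbounded iterate.
   Gradients are bounded on the optimal set because the level sets of f are bounded modulo the
   recession directions d >= 0, A^T d = 0, b^T d = 0, along which f is constant; by compactness,
   values of f close to d_k force proximity to the optimal set and conversely. The classical
   diminishing-step argument then gives f(alpha_t,beta_t) -> d_k. If z_t is eventually z*, the
   same estimate shows that a feasible y with L(z*,y) > d_k would pull the iterates towards y by
   a non-summable amount; so max L(z*,.) = d_k, which closes the duality gap. *)

lemma bounded_coords_convergent_subseq:
  fixes X :: "nat \<Rightarrow> nat \<Rightarrow> real"
  assumes "\<forall>j. \<forall>i<N. \<bar>X j i\<bar> \<le> B"
  shows "\<exists>r l. strict_mono r \<and> (\<forall>i<N. (\<lambda>j. X (r j) i) \<longlonglongrightarrow> l i)"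
  using assms
proof (induction N)
  case 0
  show ?case by (rule exI[of _ id]) (auto simp: strict_mono_def)
next
  case (Suc N)
  then obtain r1 l1 where r1: "strict_mono r1" and l1: "\<forall>i<N. (\<lambda>j. X (r1 j) i) \<longlonglongrightarrow> l1 i"
    by auto
  have "bounded (range (\<lambda>j. X (r1 j) N))"
    unfolding bounded_iff using Suc.prems by (intro exI[of _ B]) auto
  then obtain l2 r2 where r2: "strict_mono r2" and l2: "((\<lambda>j. X (r1 j) N) \<circ> r2) \<longlonglongrightarrow> l2"
    using bounded_imp_convergent_subsequence by blast
  have "(\<lambda>j. X ((r1 \<circ> r2) j) i) \<longlonglongrightarrow> (l1(N := l2)) i" if "i < Suc N" for i
  proof (cases "i = N")
    case True
    then show ?thesis using l2 by (simp add: o_def)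
  next
    case False
    with that have "i < N" by simp
    from LIMSEQ_subseq_LIMSEQ[OF l1[rule_format, OF this] r2]
    have "((\<lambda>j. X (r1 j) i) \<circ> r2) \<longlonglongrightarrow> l1 i" .
    then show ?thesis using False by (simp add: o_def)
  qed
  then show ?case using strict_mono_o[OF r1 r2] by blast
qed

lemma descent_imp_summable:
  fixes V \<kappa> :: "nat \<Rightarrow> real"
  assumes V_nonneg: "\<And>t. 0 \<le> V t" and descent: "\<And>t. t \<ge> T \<Longrightarrow> V (Suc t) \<le> V t - \<kappa> t * e"
    and "0 < e" and \<kappa>_nonneg: "\<And>t. 0 \<le> \<kappa> t"
  shows "summable \<kappa>"
proof -
  have "V (T + j) \<le> V T - e * (\<Sum>i<j. \<kappa> (i + T))" for j
  proof (induction j)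
    case (Suc j)
    have "V (T + Suc j) \<le> V (T + j) - \<kappa> (T + j) * e" using descent by simp
    also have "\<dots> \<le> V T - e * (\<Sum>i<Suc j. \<kappa> (i + T))" using Suc.IH by (simp add: algebra_simps)
    finally show ?case .
  qed simp
  then have "(\<Sum>i<j. \<kappa> (i + T)) \<le> V T / e" for j
    using V_nonneg[of "T + j"] \<open>0 < e\<close> by (smt (verit) mult.commute pos_le_divide_eq)
  then have "summable (\<lambda>i. \<kappa> (i + T))"
    using \<kappa>_nonneg by (intro summableI_nonneg_bounded) auto
  then show ?thesis using summable_iff_shift by blast
qed

lemma sum_le_sum_top:
  fixes w :: "nat \<Rightarrow> real"
  assumes "finite J" "finite Z" "card Z \<le> card J" "\<And>j. 0 \<le> w j"
    and top: "\<And>i j. i \<in> J \<Longrightarrow> j \<in> Z - J \<Longrightarrow> w j \<le> w i"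
  shows "sum w Z \<le> sum w J"
proof -
  have card_le: "card (Z - J) \<le> card (J - Z)"
    using assms(1-3) by (simp add: card_Diff_subset_Int Int_commute)
  have "sum w (Z - J) \<le> sum w (J - Z)"
  proof (cases "J - Z = {}")
    case True
    then have "card (Z - J) = 0" using card_le by (metis card.empty le_zero_eq)
    then show ?thesis using True \<open>finite Z\<close> by simp
  next
    case False
    define \<mu> where "\<mu> = Min (w ` (J - Z))"
    have \<mu>_le: "\<mu> \<le> w i" if "i \<in> J - Z" for i
      unfolding \<mu>_def using that \<open>finite J\<close> by simp
    have "\<mu> \<in> w ` (J - Z)" unfolding \<mu>_def using False \<open>finite J\<close> by (intro Min_in) auto
    then obtain i0 where i0: "i0 \<in> J - Z" "\<mu> = w i0" by auto
    have "sum w (Z - J) \<le> real (card (Z - J)) * \<mu>"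
      using sum_bounded_above[of "Z - J" w \<mu>] top[of i0] i0 by auto
    also have "\<dots> \<le> real (card (J - Z)) * \<mu>"
      using card_le i0 assms(4)[of i0] by (intro mult_right_mono) auto
    also have "\<dots> \<le> sum w (J - Z)"
      using sum_bounded_below[of "J - Z" \<mu> w] \<mu>_le by auto
    finally show ?thesis .
  qed
  moreover have "sum w Z = sum w (Z \<inter> J) + sum w (Z - J)"
    using \<open>finite Z\<close> by (metis sum.Int_Diff)
  moreover have "sum w J = sum w (Z \<inter> J) + sum w (J - Z)"
    using \<open>finite J\<close> by (metis Int_commute sum.Int_Diff)
  ultimately show ?thesis by simp
qed

lemma tendsto_zero_if_square_le:
  fixes x e :: "nat \<Rightarrow> real"
  assumes "\<And>j. (x j)\<^sup>2 \<le> e j" "e \<longlonglongrightarrow> 0"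
  shows "x \<longlonglongrightarrow> 0"
proof -
  have "(\<lambda>j. (x j)\<^sup>2) \<longlonglongrightarrow> 0"
    by (rule tendsto_sandwich[of "\<lambda>_. 0" _ _ e]) (use assms in auto)
  then have "(\<lambda>j. sqrt ((x j)\<^sup>2)) \<longlonglongrightarrow> sqrt 0" by (rule tendsto_real_sqrt)
  then show ?thesis by (simp add: tendsto_rabs_zero_cancel)
qed

lemma square_sum_le: "(p + q)\<^sup>2 \<le> 2 * p\<^sup>2 + 2 * (q::real)\<^sup>2"
  by (smt (verit) zero_le_power2 power2_diff power2_sum)

lemma young_mult_le:
  fixes x y \<theta> :: real
  assumes "0 < \<theta>"
  shows "x * y \<le> \<theta> / 2 * x\<^sup>2 + 1 / (2 * \<theta>) * y\<^sup>2"
proof -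
  have "0 \<le> (\<theta> * x - y)\<^sup>2 / (2 * \<theta>)" using assms by simp
  also have "\<dots> = \<theta> / 2 * x\<^sup>2 + 1 / (2 * \<theta>) * y\<^sup>2 - x * y"
    using assms by (simp add: power2_eq_square field_simps)
  finally show ?thesis by simp
qed

lemma max0_dist_le: "0 \<le> (y::real) \<Longrightarrow> (max 0 w - y)\<^sup>2 \<le> (w - y)\<^sup>2"
  by (auto simp: max_def abs_le_square_iff[symmetric])

lemma reduce_support:
  fixes d \<beta> :: "nat \<Rightarrow> real"
  assumes d_nonneg: "\<forall>i<m. 0 \<le> d i" and d_supp: "\<forall>i<m. i \<notin> S \<longrightarrow> d i = 0"
    and d_nonzero: "\<exists>i<m. d i \<noteq> 0"
    and \<beta>_nonneg: "\<forall>i<m. 0 \<le> \<beta> i" and \<beta>_supp: "\<forall>i<m. i \<notin> S \<longrightarrow> \<beta> i = 0"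
  obtains t i0 where "0 \<le> t" "i0 \<in> S" "\<forall>i<m. 0 \<le> \<beta> i - t * d i"
    "\<forall>i<m. i \<notin> S - {i0} \<longrightarrow> \<beta> i - t * d i = 0"
proof -
  define P where "P = {i. i < m \<and> 0 < d i}"
  have "finite P" "P \<noteq> {}"
    unfolding P_def using d_nonneg d_nonzero by (auto simp: less_le)
  define t where "t = Min ((\<lambda>i. \<beta> i / d i) ` P)"
  have t_le: "t \<le> \<beta> i / d i" if "i \<in> P" for i
    unfolding t_def using \<open>finite P\<close> that by simp
  have "t \<in> (\<lambda>i. \<beta> i / d i) ` P"
    unfolding t_def using \<open>finite P\<close> \<open>P \<noteq> {}\<close> by (intro Min_in) auto
  then obtain i0 where i0: "i0 \<in> P" "t = \<beta> i0 / d i0" by auto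
  have i0_pos: "0 < d i0" "i0 < m" using i0(1) unfolding P_def by auto
  show ?thesis
  proof
    show "0 \<le> t" using i0 i0_pos \<beta>_nonneg by simp
    show "i0 \<in> S" using i0_pos d_supp by auto
    show "\<forall>i<m. 0 \<le> \<beta> i - t * d i"
    proof (intro allI impI)
      fix i assume "i < m"
      show "0 \<le> \<beta> i - t * d i"
      proof (cases "i \<in> P")
        case True
        then show ?thesis using t_le[OF True] unfolding P_def by (simp add: pos_le_divide_eq)
      next
        case False
        then have "d i = 0" using \<open>i < m\<close> d_nonneg unfolding P_def by force
        then show ?thesis using \<open>i < m\<close> \<beta>_nonneg by simp
      qed
    qed
    show "\<forall>i<m. i \<notin> S - {i0} \<longrightarrow> \<beta> i - t * d i = 0"
      using i0 i0_pos d_supp \<beta>_supp by auto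
  qed
qed

lemma abs_le_one_plus_square: "\<bar>x::real\<bar> \<le> 1 + x\<^sup>2"
proof -
  have "0 \<le> (\<bar>x\<bar> - 1)\<^sup>2" by simp
  then have "2 * \<bar>x\<bar> \<le> 1 + x\<^sup>2" by (simp add: power2_eq_square algebra_simps)
  then show ?thesis by simp
qed

lemma scaled_tendsto_zero_if_square_le_linear:
  fixes x \<rho> :: "nat \<Rightarrow> real"
  assumes sq: "\<And>j. (x j)\<^sup>2 \<le> B * \<rho> j + C" and pos: "\<And>j. 0 < \<rho> j"
    and lim: "filterlim \<rho> at_top sequentially"
  shows "(\<lambda>j. x j / \<rho> j) \<longlonglongrightarrow> 0"
proof (rule tendsto_zero_if_square_le)
  have inv: "(\<lambda>j. 1 / \<rho> j) \<longlonglongrightarrow> 0"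
    using tendsto_inverse_0_at_top[OF lim] by (simp add: inverse_eq_divide)
  show "(\<lambda>j. B * (1 / \<rho> j) + C * (1 / \<rho> j)\<^sup>2) \<longlonglongrightarrow> 0"
    using tendsto_add[OF tendsto_mult_left[OF inv, of B] tendsto_mult_left[OF tendsto_power[OF inv, of 2], of C]]
    by simp
  show "(x j / \<rho> j)\<^sup>2 \<le> B * (1 / \<rho> j) + C * (1 / \<rho> j)\<^sup>2" for j
  proof -
    have "(x j / \<rho> j)\<^sup>2 \<le> (B * \<rho> j + C) / (\<rho> j)\<^sup>2"
      using sq[of j] pos[of j] by (simp add: power_divide divide_right_mono)
    also have "\<dots> = B * (1 / \<rho> j) + C * (1 / \<rho> j)\<^sup>2"
      using pos[of j] by (simp add: field_simps power2_eq_square)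
    finally show ?thesis .
  qed
qed

locale sparse_dual =
  fixes n m k s :: nat and lam :: "nat \<Rightarrow> real" and v A :: "nat \<Rightarrow> nat \<Rightarrow> real"
    and b c :: "nat \<Rightarrow> real" and \<eta> :: real
  assumes eta_pos: "0 < \<eta>" and s_pos: "0 < s"
begin

abbreviation "\<gamma> \<equiv> gam k m lam v A c"
abbreviation "L \<equiv> Lfun n m k lam v A b c \<eta>"
abbreviation "F \<equiv> fdual n m k s lam v A b c \<eta>"

lemma Zs_cases: "z \<in> Zs n s \<Longrightarrow> z j = 0 \<or> z j = 1"
  unfolding Zs_def by auto

lemma Zs_nonneg: "z \<in> Zs n s \<Longrightarrow> 0 \<le> z j"
  using Zs_cases[of z j] by auto

lemma Zs_square: "z \<in> Zs n s \<Longrightarrow> (z j)\<^sup>2 = z j"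
  using Zs_cases[of z j] by auto

lemma Zs_eq_indicator:
  assumes "z \<in> Zs n s"
  shows "z = indicator {j. j < n \<and> z j = 1}"
  using assms unfolding Zs_def by (force simp: indicator_def not_less[symmetric])

lemma sum_indicator_weight:
  "S \<subseteq> {..<n} \<Longrightarrow> (\<Sum>j<n. indicator S j * w j) = (sum w S :: real)"
  by (simp add: indicator_def sum.If_cases Int_absorb1)

lemma finite_Zs: "finite (Zs n s)"
proof (rule finite_subset)
  show "Zs n s \<subseteq> indicator ` Pow {..<n}"
    using Zs_eq_indicator by fastforce
qed auto

lemma zero_in_Zs: "(\<lambda>_. 0) \<in> Zs n s"
  unfolding Zs_def by auto

lemma indicator_in_Zs:
  assumes "S \<subseteq> {..<n}" "card S \<le> s"
  shows "indicator S \<in> Zs n s"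
  using assms sum_indicator_weight[OF assms(1), of "\<lambda>_. 1"] unfolding Zs_def
  by (auto simp: indicator_def)

lemma fdual_le: "z \<in> Zs n s \<Longrightarrow> F \<alpha> \<beta> \<le> L z \<alpha> \<beta>"
  unfolding fdual_def by (rule Min_le) (auto simp: finite_Zs)

lemma fdual_attained: "\<exists>z\<in>Zs n s. F \<alpha> \<beta> = L z \<alpha> \<beta>"
proof -
  have "F \<alpha> \<beta> \<in> (\<lambda>z. L z \<alpha> \<beta>) ` Zs n s"
    unfolding fdual_def by (rule Min_in) (use finite_Zs zero_in_Zs in auto)
  then show ?thesis by auto
qed

lemma L_top_indicator_le:
  assumes J: "J \<subseteq> {..<n}" "card J = s"
    and top: "\<forall>i\<in>J. \<forall>j\<in>{..<n} - J. \<bar>\<gamma> \<alpha> \<beta> j\<bar> \<le> \<bar>\<gamma> \<alpha> \<beta> i\<bar>"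
    and z: "z \<in> Zs n s"
  shows "L (indicator J) \<alpha> \<beta> \<le> L z \<alpha> \<beta>"
proof -
  define Z where "Z = {j. j < n \<and> z j = 1}"
  have Z: "Z \<subseteq> {..<n}" and z_eq: "z = indicator Z"
    unfolding Z_def using Zs_eq_indicator[OF z] by auto
  have "card Z \<le> card J"
    using z J sum_indicator_weight[OF Z, of "\<lambda>_. 1"] unfolding Zs_def z_eq by simp
  then have "sum (\<lambda>j. (\<gamma> \<alpha> \<beta> j)\<^sup>2) Z \<le> sum (\<lambda>j. (\<gamma> \<alpha> \<beta> j)\<^sup>2) J"
    using J Z top finite_subset[OF J(1)] finite_subset[OF Z]
    by (intro sum_le_sum_top) (auto intro!: abs_le_square_iff[THEN iffD1])
  then show ?thesis
    unfolding Lfun_def z_eq sum_indicator_weight[OF Z] sum_indicator_weight[OF J(1)]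
    using eta_pos by (simp add: mult_left_mono)
qed

lemma fdual_eq_top_indicator:
  assumes "J \<subseteq> {..<n}" "card J = s"
    and "\<forall>i\<in>J. \<forall>j\<in>{..<n} - J. \<bar>\<gamma> \<alpha> \<beta> j\<bar> \<le> \<bar>\<gamma> \<alpha> \<beta> i\<bar>"
  shows "F \<alpha> \<beta> = L (indicator J) \<alpha> \<beta>"
proof -
  obtain z where "z \<in> Zs n s" "F \<alpha> \<beta> = L z \<alpha> \<beta>" using fdual_attained by blast
  moreover have "indicator J \<in> Zs n s" using assms by (intro indicator_in_Zs) auto
  ultimately show ?thesis using L_top_indicator_le[OF assms] fdual_le by (metis order_antisym)
qed

definition sqnorm :: "(nat \<Rightarrow> real) \<Rightarrow> (nat \<Rightarrow> real) \<Rightarrow> real" where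
  "sqnorm a p = (\<Sum>i<k. (a i)\<^sup>2) + (\<Sum>i<m. (p i)\<^sup>2)"

abbreviation sqdist where
  "sqdist a p a' p' \<equiv> sqnorm (\<lambda>i. a i - a' i) (\<lambda>i. p i - p' i)"

definition inner_pair :: "(nat \<Rightarrow> real) \<Rightarrow> (nat \<Rightarrow> real) \<Rightarrow> (nat \<Rightarrow> real) \<Rightarrow> (nat \<Rightarrow> real) \<Rightarrow> real"
  where "inner_pair g h a p = (\<Sum>i<k. g i * a i) + (\<Sum>i<m. h i * p i)"

definition grad_a where
  "grad_a z \<alpha> \<beta> i = - \<alpha> i / 2 - \<eta> / 2 * sqrt (lam i) * (\<Sum>j<n. v i j * z j * \<gamma> \<alpha> \<beta> j)"

definition grad_b where
  "grad_b z \<alpha> \<beta> i = - b i - \<eta> / 2 * (\<Sum>j<n. A i j * z j * \<gamma> \<alpha> \<beta> j)"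

abbreviation grad_sqnorm where
  "grad_sqnorm z \<alpha> \<beta> \<equiv> sqnorm (grad_a z \<alpha> \<beta>) (grad_b z \<alpha> \<beta>)"

definition curv where
  "curv z \<alpha> \<beta> \<alpha>' \<beta>' = (\<Sum>i<k. (\<alpha>' i - \<alpha> i)\<^sup>2) / 4
     + \<eta> / 4 * (\<Sum>j<n. z j * (\<gamma> \<alpha>' \<beta>' j - \<gamma> \<alpha> \<beta> j)\<^sup>2)"

definition frob2 where
  "frob2 = (\<Sum>i<k. \<Sum>j<n. (v i j * sqrt (lam i))\<^sup>2) + (\<Sum>i<m. \<Sum>j<n. (A i j)\<^sup>2)"

definition lip where "lip = 2 + 2 * \<eta> * frob2"

lemma frob2_nonneg: "0 \<le> frob2"
  unfolding frob2_def by (auto intro!: add_nonneg_nonneg sum_nonneg)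

lemma lip_pos: "0 < lip"
  unfolding lip_def using frob2_nonneg eta_pos by (simp add: add_pos_nonneg)

lemma sqnorm_nonneg: "0 \<le> sqnorm a p"
  unfolding sqnorm_def by (auto intro!: add_nonneg_nonneg sum_nonneg)

lemma sqdist_commute: "sqdist a p a' p' = sqdist a' p' a p"
  unfolding sqnorm_def by (simp add: power2_commute)

lemma sqnorm_add_le: "sqnorm (\<lambda>i. a i + a' i) (\<lambda>i. p i + p' i) \<le> 2 * sqnorm a p + 2 * sqnorm a' p'"
proof -
  have "(\<Sum>i<k. (a i + a' i)\<^sup>2) \<le> (\<Sum>i<k. 2 * (a i)\<^sup>2 + 2 * (a' i)\<^sup>2)"
    "(\<Sum>i<m. (p i + p' i)\<^sup>2) \<le> (\<Sum>i<m. 2 * (p i)\<^sup>2 + 2 * (p' i)\<^sup>2)"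
    by (intro sum_mono square_sum_le)+
  then show ?thesis unfolding sqnorm_def by (simp add: sum.distrib sum_distrib_left)
qed

lemma sqnorm_add_scaled:
  "sqnorm (\<lambda>i. a i + \<kappa> * g i) (\<lambda>i. p i + \<kappa> * h i) = sqnorm a p + 2 * \<kappa> * inner_pair g h a p + \<kappa>\<^sup>2 * sqnorm g h"
proof -
  have e: "\<And>x y. (x + \<kappa> * y)\<^sup>2 = x\<^sup>2 + 2 * \<kappa> * (y * x) + \<kappa>\<^sup>2 * y\<^sup>2"
    by (simp add: power2_eq_square algebra_simps)
  show ?thesis unfolding sqnorm_def inner_pair_def e
    by (simp only: sum.distrib sum_distrib_left[symmetric]) (simp add: algebra_simps)
qed

lemma inner_pair_le:
  assumes "0 < \<theta>"
  shows "inner_pair g h a p \<le> \<theta> / 2 * sqnorm g h + 1 / (2 * \<theta>) * sqnorm a p"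
proof -
  have "inner_pair g h a p \<le> (\<Sum>i<k. \<theta> / 2 * (g i)\<^sup>2 + 1 / (2 * \<theta>) * (a i)\<^sup>2)
      + (\<Sum>i<m. \<theta> / 2 * (h i)\<^sup>2 + 1 / (2 * \<theta>) * (p i)\<^sup>2)"
    unfolding inner_pair_def using young_mult_le[OF assms] by (intro add_mono sum_mono) auto
  also have "\<dots> = \<theta> / 2 * sqnorm g h + 1 / (2 * \<theta>) * sqnorm a p"
    unfolding sqnorm_def by (simp add: sum.distrib sum_distrib_left algebra_simps)
  finally show ?thesis .
qed

lemma sqnorm_coord_le: "i < k \<Longrightarrow> (a i)\<^sup>2 \<le> sqnorm a p" "i < m \<Longrightarrow> (p i)\<^sup>2 \<le> sqnorm a p"
  unfolding sqnorm_def
  using member_le_sum[of i "{..<k}" "\<lambda>i. (a i)\<^sup>2"] member_le_sum[of i "{..<m}" "\<lambda>i. (p i)\<^sup>2"]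
    sum_nonneg[of "{..<k}" "\<lambda>i. (a i)\<^sup>2"] sum_nonneg[of "{..<m}" "\<lambda>i. (p i)\<^sup>2"]
  by auto

lemma gam_diff: "\<gamma> \<alpha>' \<beta>' j - \<gamma> \<alpha> \<beta> j =
   (\<Sum>i<k. v i j * sqrt (lam i) * (\<alpha>' i - \<alpha> i)) + (\<Sum>i<m. A i j * (\<beta>' i - \<beta> i))"
  by (simp add: gam_def algebra_simps sum_subtractf)

lemma weighted_gam_diff_eq:
  "(\<Sum>i<k. sqrt (lam i) * (\<Sum>j<n. v i j * z j * \<gamma> \<alpha> \<beta> j) * (\<alpha>' i - \<alpha> i))
   + (\<Sum>i<m. (\<Sum>j<n. A i j * z j * \<gamma> \<alpha> \<beta> j) * (\<beta>' i - \<beta> i))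
   = (\<Sum>j<n. z j * \<gamma> \<alpha> \<beta> j * (\<gamma> \<alpha>' \<beta>' j - \<gamma> \<alpha> \<beta> j))"
proof -
  have "(\<Sum>j<n. z j * \<gamma> \<alpha> \<beta> j * (\<gamma> \<alpha>' \<beta>' j - \<gamma> \<alpha> \<beta> j))
     = (\<Sum>j<n. \<Sum>i<k. z j * \<gamma> \<alpha> \<beta> j * (v i j * sqrt (lam i) * (\<alpha>' i - \<alpha> i)))
     + (\<Sum>j<n. \<Sum>i<m. z j * \<gamma> \<alpha> \<beta> j * (A i j * (\<beta>' i - \<beta> i)))"
    by (simp add: gam_diff sum_distrib_left sum.distrib distrib_left)
  also have "\<dots> = (\<Sum>i<k. \<Sum>j<n. z j * \<gamma> \<alpha> \<beta> j * (v i j * sqrt (lam i) * (\<alpha>' i - \<alpha> i)))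
     + (\<Sum>i<m. \<Sum>j<n. z j * \<gamma> \<alpha> \<beta> j * (A i j * (\<beta>' i - \<beta> i)))"
    by (simp add: sum.swap[of _ "{..<n}" "{..<k}"] sum.swap[of _ "{..<n}" "{..<m}"])
  finally show ?thesis by (simp add: sum_distrib_left sum_distrib_right mult_ac)
qed

lemma L_taylor:
  "L z \<alpha>' \<beta>' = L z \<alpha> \<beta> + inner_pair (grad_a z \<alpha> \<beta>) (grad_b z \<alpha> \<beta>) (\<lambda>i. \<alpha>' i - \<alpha> i) (\<lambda>i. \<beta>' i - \<beta> i)
     - curv z \<alpha> \<beta> \<alpha>' \<beta>'"
proof -
  define G where "G j = \<gamma> \<alpha> \<beta> j" for j
  define D where "D j = \<gamma> \<alpha>' \<beta>' j - \<gamma> \<alpha> \<beta> j" for j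
  have e1: "(\<Sum>i<k. (\<alpha>' i)\<^sup>2) = (\<Sum>i<k. (\<alpha> i)\<^sup>2) + 2 * (\<Sum>i<k. \<alpha> i * (\<alpha>' i - \<alpha> i)) + (\<Sum>i<k. (\<alpha>' i - \<alpha> i)\<^sup>2)"
    by (simp add: sum.distrib sum_distrib_left power2_eq_square algebra_simps sum_subtractf)
  have e2: "(\<Sum>j<n. z j * (\<gamma> \<alpha>' \<beta>' j)\<^sup>2) = (\<Sum>j<n. z j * (G j)\<^sup>2) + 2 * (\<Sum>j<n. z j * G j * D j) + (\<Sum>j<n. z j * (D j)\<^sup>2)"
    by (simp add: G_def D_def sum.distrib sum_distrib_left power2_eq_square algebra_simps sum_subtractf)
  have e3: "(\<Sum>i<m. \<beta>' i * b i) = (\<Sum>i<m. \<beta> i * b i) + (\<Sum>i<m. b i * (\<beta>' i - \<beta> i))"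
    by (simp add: sum.distrib algebra_simps sum_subtractf)
  have a: "(\<Sum>i<k. grad_a z \<alpha> \<beta> i * (\<alpha>' i - \<alpha> i)) = (\<Sum>i<k. (-1/2) * (\<alpha> i * (\<alpha>' i - \<alpha> i))
      + (-\<eta>/2) * (sqrt (lam i) * (\<Sum>j<n. v i j * z j * \<gamma> \<alpha> \<beta> j) * (\<alpha>' i - \<alpha> i)))"
    by (rule sum.cong) (auto simp: grad_a_def field_simps)
  have b: "(\<Sum>i<m. grad_b z \<alpha> \<beta> i * (\<beta>' i - \<beta> i)) = (\<Sum>i<m. (-1) * (b i * (\<beta>' i - \<beta> i))
      + (-\<eta>/2) * ((\<Sum>j<n. A i j * z j * \<gamma> \<alpha> \<beta> j) * (\<beta>' i - \<beta> i)))"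
    by (rule sum.cong) (auto simp: grad_b_def field_simps)
  have "inner_pair (grad_a z \<alpha> \<beta>) (grad_b z \<alpha> \<beta>) (\<lambda>i. \<alpha>' i - \<alpha> i) (\<lambda>i. \<beta>' i - \<beta> i)
     = - (\<Sum>i<k. \<alpha> i * (\<alpha>' i - \<alpha> i)) / 2 - (\<Sum>i<m. b i * (\<beta>' i - \<beta> i))
       - \<eta> / 2 * ((\<Sum>i<k. sqrt (lam i) * (\<Sum>j<n. v i j * z j * \<gamma> \<alpha> \<beta> j) * (\<alpha>' i - \<alpha> i))
         + (\<Sum>i<m. (\<Sum>j<n. A i j * z j * \<gamma> \<alpha> \<beta> j) * (\<beta>' i - \<beta> i)))"
    unfolding inner_pair_def a b
    by (simp only: sum.distrib sum_distrib_left[symmetric]) (simp add: algebra_simps)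
  also have "\<dots> = - (\<Sum>i<k. \<alpha> i * (\<alpha>' i - \<alpha> i)) / 2 - (\<Sum>i<m. b i * (\<beta>' i - \<beta> i))
       - \<eta> / 2 * (\<Sum>j<n. z j * G j * D j)"
    unfolding weighted_gam_diff_eq G_def D_def ..
  finally have ip: "inner_pair (grad_a z \<alpha> \<beta>) (grad_b z \<alpha> \<beta>) (\<lambda>i. \<alpha>' i - \<alpha> i) (\<lambda>i. \<beta>' i - \<beta> i)
     = - (\<Sum>i<k. \<alpha> i * (\<alpha>' i - \<alpha> i)) / 2 - (\<Sum>i<m. b i * (\<beta>' i - \<beta> i))
       - \<eta> / 2 * (\<Sum>j<n. z j * G j * D j)" .
  show ?thesis
    unfolding Lfun_def curv_def ip e1 e2 e3 by (simp add: G_def D_def algebra_simps)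
qed

lemma curv_nonneg: "z \<in> Zs n s \<Longrightarrow> 0 \<le> curv z \<alpha> \<beta> \<alpha>' \<beta>'"
  unfolding curv_def using eta_pos Zs_nonneg[of z]
  by (intro add_nonneg_nonneg divide_nonneg_nonneg mult_nonneg_nonneg sum_nonneg) auto

lemma weighted_Cauchy_Schwarz:
  assumes "z \<in> Zs n s"
  shows "(\<Sum>j<n. a j * z j * d j)\<^sup>2 \<le> (\<Sum>j<n. (a j)\<^sup>2) * (\<Sum>j<n. z j * (d j)\<^sup>2)"
proof -
  have "(\<Sum>j<n. a j * z j * d j)\<^sup>2 \<le> (\<Sum>j<n. (a j)\<^sup>2) * (\<Sum>j<n. (z j * d j)\<^sup>2)"
    using Cauchy_Schwarz_ineq_sum[of a "\<lambda>j. z j * d j" "{..<n}"] by (simp add: mult_ac)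
  also have "(\<Sum>j<n. (z j * d j)\<^sup>2) = (\<Sum>j<n. z j * (d j)\<^sup>2)"
    using Zs_square[OF assms] by (simp add: power_mult_distrib)
  finally show ?thesis .
qed

lemma grad_a_diff:
  "grad_a z \<alpha>' \<beta>' i - grad_a z \<alpha> \<beta> i = - (\<alpha>' i - \<alpha> i) / 2
     - \<eta> / 2 * (\<Sum>j<n. (v i j * sqrt (lam i)) * z j * (\<gamma> \<alpha>' \<beta>' j - \<gamma> \<alpha> \<beta> j))"
proof -
  have h: "(\<Sum>j<n. (v i j * sqrt (lam i)) * z j * (\<gamma> \<alpha>' \<beta>' j - \<gamma> \<alpha> \<beta> j))
      = sqrt (lam i) * (\<Sum>j<n. v i j * z j * \<gamma> \<alpha>' \<beta>' j) - sqrt (lam i) * (\<Sum>j<n. v i j * z j * \<gamma> \<alpha> \<beta> j)"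
    by (simp add: sum_distrib_left sum_subtractf[symmetric] algebra_simps)
  show ?thesis unfolding h grad_a_def by (simp add: field_simps)
qed

lemma grad_b_diff:
  "grad_b z \<alpha>' \<beta>' i - grad_b z \<alpha> \<beta> i = - \<eta> / 2 * (\<Sum>j<n. A i j * z j * (\<gamma> \<alpha>' \<beta>' j - \<gamma> \<alpha> \<beta> j))"
proof -
  have h: "(\<Sum>j<n. A i j * z j * (\<gamma> \<alpha>' \<beta>' j - \<gamma> \<alpha> \<beta> j))
      = (\<Sum>j<n. A i j * z j * \<gamma> \<alpha>' \<beta>' j) - (\<Sum>j<n. A i j * z j * \<gamma> \<alpha> \<beta> j)"
    by (simp add: sum_subtractf[symmetric] algebra_simps)
  show ?thesis unfolding h grad_b_def by (simp add: field_simps)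
qed

lemma grad_lipschitz:
  assumes z: "z \<in> Zs n s"
  shows "sqnorm (\<lambda>i. grad_a z \<alpha>' \<beta>' i - grad_a z \<alpha> \<beta> i) (\<lambda>i. grad_b z \<alpha>' \<beta>' i - grad_b z \<alpha> \<beta> i)
         \<le> lip * curv z \<alpha> \<beta> \<alpha>' \<beta>'"
proof -
  define D where "D j = \<gamma> \<alpha>' \<beta>' j - \<gamma> \<alpha> \<beta> j" for j
  define W where "W = (\<Sum>j<n. z j * (D j)\<^sup>2)"
  define Da where "Da = (\<Sum>i<k. (\<alpha>' i - \<alpha> i)\<^sup>2)"
  have W_nonneg: "0 \<le> W" unfolding W_def by (auto intro!: sum_nonneg mult_nonneg_nonneg Zs_nonneg[OF z])
  have Da_nonneg: "0 \<le> Da" unfolding Da_def by (auto intro: sum_nonneg)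
  have a: "(\<Sum>i<k. (grad_a z \<alpha>' \<beta>' i - grad_a z \<alpha> \<beta> i)\<^sup>2) \<le>
       (\<Sum>i<k. (\<alpha>' i - \<alpha> i)\<^sup>2 / 2 + \<eta>\<^sup>2 / 2 * ((\<Sum>j<n. (v i j * sqrt (lam i))\<^sup>2) * W))"
  proof (rule sum_mono)
    fix i
    define S where "S = (\<Sum>j<n. (v i j * sqrt (lam i)) * z j * D j)"
    have "(grad_a z \<alpha>' \<beta>' i - grad_a z \<alpha> \<beta> i)\<^sup>2 = (- (\<alpha>' i - \<alpha> i) / 2 + - (\<eta> / 2 * S))\<^sup>2"
      unfolding grad_a_diff S_def D_def by (simp only: diff_conv_add_uminus)
    also have "\<dots> \<le> 2 * (- (\<alpha>' i - \<alpha> i) / 2)\<^sup>2 + 2 * (- (\<eta> / 2 * S))\<^sup>2"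
      by (rule square_sum_le)
    also have "\<dots> = (\<alpha>' i - \<alpha> i)\<^sup>2 / 2 + \<eta>\<^sup>2 / 2 * (\<Sum>j<n. (v i j * sqrt (lam i)) * z j * D j)\<^sup>2"
      unfolding S_def by (simp add: power_mult_distrib power_divide power2_commute)
    also have "\<dots> \<le> (\<alpha>' i - \<alpha> i)\<^sup>2 / 2 + \<eta>\<^sup>2 / 2 * ((\<Sum>j<n. (v i j * sqrt (lam i))\<^sup>2) * W)"
      unfolding W_def by (intro add_left_mono mult_left_mono weighted_Cauchy_Schwarz[OF z]) auto
    finally show "(grad_a z \<alpha>' \<beta>' i - grad_a z \<alpha> \<beta> i)\<^sup>2 \<le> \<dots>" .
  qed
  have b: "(\<Sum>i<m. (grad_b z \<alpha>' \<beta>' i - grad_b z \<alpha> \<beta> i)\<^sup>2) \<le> (\<Sum>i<m. \<eta>\<^sup>2 / 2 * ((\<Sum>j<n. (A i j)\<^sup>2) * W))"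
  proof (rule sum_mono)
    fix i
    have "(grad_b z \<alpha>' \<beta>' i - grad_b z \<alpha> \<beta> i)\<^sup>2 = \<eta>\<^sup>2 / 4 * (\<Sum>j<n. A i j * z j * D j)\<^sup>2"
      unfolding grad_b_diff D_def by (simp add: power_mult_distrib power_divide)
    also have "\<dots> \<le> \<eta>\<^sup>2 / 4 * ((\<Sum>j<n. (A i j)\<^sup>2) * W)"
      unfolding W_def by (intro mult_left_mono weighted_Cauchy_Schwarz[OF z]) auto
    also have "\<dots> \<le> \<eta>\<^sup>2 / 2 * ((\<Sum>j<n. (A i j)\<^sup>2) * W)"
      using W_nonneg by (intro mult_right_mono mult_nonneg_nonneg sum_nonneg) auto
    finally show "(grad_b z \<alpha>' \<beta>' i - grad_b z \<alpha> \<beta> i)\<^sup>2 \<le> \<dots>" .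
  qed
  have "sqnorm (\<lambda>i. grad_a z \<alpha>' \<beta>' i - grad_a z \<alpha> \<beta> i) (\<lambda>i. grad_b z \<alpha>' \<beta>' i - grad_b z \<alpha> \<beta> i)
     \<le> Da / 2 + \<eta>\<^sup>2 / 2 * frob2 * W"
    using add_mono[OF a b] unfolding sqnorm_def frob2_def Da_def
    by (simp add: sum.distrib sum_distrib_left sum_distrib_right sum_divide_distrib algebra_simps)
  also have "\<dots> \<le> (2 + 2 * \<eta> * frob2) * (Da / 4 + \<eta> / 4 * W)"
  proof -
    have "(2 + 2 * \<eta> * frob2) * (Da / 4 + \<eta> / 4 * W)
        = (Da / 2 + \<eta>\<^sup>2 / 2 * frob2 * W) + (\<eta> / 2 * W + \<eta> * frob2 * Da / 2)"
      by (simp add: power2_eq_square field_simps)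
    moreover have "0 \<le> \<eta> / 2 * W + \<eta> * frob2 * Da / 2"
      using Da_nonneg W_nonneg eta_pos frob2_nonneg by simp
    ultimately show ?thesis by linarith
  qed
  finally show ?thesis unfolding lip_def curv_def W_def D_def Da_def .
qed

lemma curv_le:
  assumes z: "z \<in> Zs n s"
  shows "curv z \<alpha> \<beta> \<alpha>' \<beta>' \<le> (1/4 + \<eta> / 2 * frob2) * sqdist \<alpha>' \<beta>' \<alpha> \<beta>"
proof -
  define N where "N = sqdist \<alpha>' \<beta>' \<alpha> \<beta>"
  define Ca where "Ca j = (\<Sum>i<k. (v i j * sqrt (lam i))\<^sup>2)" for j
  define Cb where "Cb j = (\<Sum>i<m. (A i j)\<^sup>2)" for j
  have Na: "(\<Sum>i<k. (\<alpha>' i - \<alpha> i)\<^sup>2) \<le> N" and Nb: "(\<Sum>i<m. (\<beta>' i - \<beta> i)\<^sup>2) \<le> N"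
    unfolding N_def sqnorm_def by (auto intro!: sum_nonneg)
  have gam_diff_sq: "(\<gamma> \<alpha>' \<beta>' j - \<gamma> \<alpha> \<beta> j)\<^sup>2 \<le> 2 * (Ca j + Cb j) * N" for j
  proof -
    have "(\<Sum>i<k. v i j * sqrt (lam i) * (\<alpha>' i - \<alpha> i))\<^sup>2 \<le> Ca j * (\<Sum>i<k. (\<alpha>' i - \<alpha> i)\<^sup>2)"
      unfolding Ca_def by (rule Cauchy_Schwarz_ineq_sum)
    also have "\<dots> \<le> Ca j * N" unfolding Ca_def by (intro mult_left_mono Na sum_nonneg) auto
    finally have a: "(\<Sum>i<k. v i j * sqrt (lam i) * (\<alpha>' i - \<alpha> i))\<^sup>2 \<le> Ca j * N" .
    have "(\<Sum>i<m. A i j * (\<beta>' i - \<beta> i))\<^sup>2 \<le> Cb j * (\<Sum>i<m. (\<beta>' i - \<beta> i)\<^sup>2)"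
      unfolding Cb_def by (rule Cauchy_Schwarz_ineq_sum)
    also have "\<dots> \<le> Cb j * N" unfolding Cb_def by (intro mult_left_mono Nb sum_nonneg) auto
    finally have b: "(\<Sum>i<m. A i j * (\<beta>' i - \<beta> i))\<^sup>2 \<le> Cb j * N" .
    have "(\<gamma> \<alpha>' \<beta>' j - \<gamma> \<alpha> \<beta> j)\<^sup>2 \<le> 2 * (Ca j * N) + 2 * (Cb j * N)"
      unfolding gam_diff using order_trans[OF square_sum_le add_mono[OF mult_left_mono[OF a] mult_left_mono[OF b]]]
      by simp
    then show ?thesis by (simp add: algebra_simps)
  qed
  have "(\<Sum>j<n. z j * (\<gamma> \<alpha>' \<beta>' j - \<gamma> \<alpha> \<beta> j)\<^sup>2) \<le> (\<Sum>j<n. 2 * (Ca j + Cb j) * N)"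
  proof (rule sum_mono)
    fix j
    have "z j * (\<gamma> \<alpha>' \<beta>' j - \<gamma> \<alpha> \<beta> j)\<^sup>2 \<le> (\<gamma> \<alpha>' \<beta>' j - \<gamma> \<alpha> \<beta> j)\<^sup>2"
      using Zs_cases[OF z, of j] by auto
    then show "z j * (\<gamma> \<alpha>' \<beta>' j - \<gamma> \<alpha> \<beta> j)\<^sup>2 \<le> 2 * (Ca j + Cb j) * N"
      using gam_diff_sq[of j] by linarith
  qed
  also have "\<dots> = 2 * frob2 * N"
    unfolding frob2_def Ca_def Cb_def
    by (simp add: sum_distrib_right[symmetric] sum_distrib_left[symmetric] sum.distrib
        sum.swap[of _ "{..<n}" "{..<k}"] sum.swap[of _ "{..<n}" "{..<m}"] mult_ac)
  finally have "(\<Sum>j<n. z j * (\<gamma> \<alpha>' \<beta>' j - \<gamma> \<alpha> \<beta> j)\<^sup>2) \<le> 2 * frob2 * N" .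
  then have "curv z \<alpha> \<beta> \<alpha>' \<beta>' \<le> N / 4 + \<eta> / 4 * (2 * frob2 * N)"
    unfolding curv_def using Na eta_pos by (intro add_mono mult_left_mono divide_right_mono) auto
  then show ?thesis unfolding N_def by (simp add: algebra_simps)
qed

lemma grad_sqnorm_le:
  assumes z: "z \<in> Zs n s"
  shows "grad_sqnorm z \<alpha> \<beta> \<le> 2 * lip * curv z \<alpha> \<beta> \<alpha>' \<beta>' + 2 * grad_sqnorm z \<alpha>' \<beta>'"
proof -
  have "grad_sqnorm z \<alpha> \<beta> = sqnorm (\<lambda>i. (grad_a z \<alpha> \<beta> i - grad_a z \<alpha>' \<beta>' i) + grad_a z \<alpha>' \<beta>' i)
      (\<lambda>i. (grad_b z \<alpha> \<beta> i - grad_b z \<alpha>' \<beta>' i) + grad_b z \<alpha>' \<beta>' i)"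
    by simp
  also have "\<dots> \<le> 2 * sqnorm (\<lambda>i. grad_a z \<alpha> \<beta> i - grad_a z \<alpha>' \<beta>' i) (\<lambda>i. grad_b z \<alpha> \<beta> i - grad_b z \<alpha>' \<beta>' i)
      + 2 * grad_sqnorm z \<alpha>' \<beta>'"
    by (rule sqnorm_add_le)
  also have "sqnorm (\<lambda>i. grad_a z \<alpha> \<beta> i - grad_a z \<alpha>' \<beta>' i) (\<lambda>i. grad_b z \<alpha> \<beta> i - grad_b z \<alpha>' \<beta>' i)
      \<le> lip * curv z \<alpha> \<beta> \<alpha>' \<beta>'"
    by (metis sqdist_commute grad_lipschitz[OF z])
  finally show ?thesis by simp
qed

lemma projected_step_estimate:
  assumes z: "z \<in> Zs n s" and \<kappa>: "0 < \<kappa>" "\<kappa> * lip \<le> 1"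
    and \<alpha>': "\<forall>i<k. \<alpha>' i = \<alpha> i + \<kappa> * grad_a z \<alpha> \<beta> i"
    and \<beta>': "\<forall>i<m. \<beta>' i = max 0 (\<beta> i + \<kappa> * grad_b z \<alpha> \<beta> i)"
    and y: "\<forall>i<m. 0 \<le> yb i"
  shows "sqdist \<alpha>' \<beta>' ya yb \<le> sqdist \<alpha> \<beta> ya yb - 2 * \<kappa> * (L z ya yb - L z \<alpha> \<beta>)
           + 2 * \<kappa>\<^sup>2 * grad_sqnorm z ya yb"
proof -
  define Q where "Q = curv z \<alpha> \<beta> ya yb"
  have Q_nonneg: "0 \<le> Q" unfolding Q_def by (rule curv_nonneg[OF z])
  have "sqdist \<alpha>' \<beta>' ya yb \<le> sqnorm (\<lambda>i. (\<alpha> i - ya i) + \<kappa> * grad_a z \<alpha> \<beta> i)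
      (\<lambda>i. (\<beta> i - yb i) + \<kappa> * grad_b z \<alpha> \<beta> i)"
    unfolding sqnorm_def
  proof (intro add_mono sum_mono)
    fix i assume "i \<in> {..<m}"
    then show "(\<beta>' i - yb i)\<^sup>2 \<le> (\<beta> i - yb i + \<kappa> * grad_b z \<alpha> \<beta> i)\<^sup>2"
      using \<beta>' y max0_dist_le[of "yb i" "\<beta> i + \<kappa> * grad_b z \<alpha> \<beta> i"] by (simp add: algebra_simps)
  qed (simp add: \<alpha>' algebra_simps)
  also have "\<dots> = sqdist \<alpha> \<beta> ya yb
      + 2 * \<kappa> * inner_pair (grad_a z \<alpha> \<beta>) (grad_b z \<alpha> \<beta>) (\<lambda>i. \<alpha> i - ya i) (\<lambda>i. \<beta> i - yb i)
      + \<kappa>\<^sup>2 * grad_sqnorm z \<alpha> \<beta>"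
    by (rule sqnorm_add_scaled)
  finally have step: "sqdist \<alpha>' \<beta>' ya yb \<le> sqdist \<alpha> \<beta> ya yb
      + 2 * \<kappa> * inner_pair (grad_a z \<alpha> \<beta>) (grad_b z \<alpha> \<beta>) (\<lambda>i. \<alpha> i - ya i) (\<lambda>i. \<beta> i - yb i)
      + \<kappa>\<^sup>2 * grad_sqnorm z \<alpha> \<beta>" .
  have inner: "inner_pair (grad_a z \<alpha> \<beta>) (grad_b z \<alpha> \<beta>) (\<lambda>i. \<alpha> i - ya i) (\<lambda>i. \<beta> i - yb i)
      = L z \<alpha> \<beta> - L z ya yb - Q"
    using L_taylor[of z ya yb \<alpha> \<beta>] unfolding Q_def inner_pair_def
    by (simp add: sum_negf[symmetric] algebra_simps)
  have "\<kappa>\<^sup>2 * grad_sqnorm z \<alpha> \<beta> \<le> \<kappa>\<^sup>2 * (2 * lip * Q + 2 * grad_sqnorm z ya yb)"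
    unfolding Q_def by (intro mult_left_mono grad_sqnorm_le[OF z]) auto
  \<comment> \<open>The curvature gain of the step pays for the gradient mismatch between the iterate and y.\<close>
  moreover have "\<kappa>\<^sup>2 * (2 * lip * Q) \<le> 2 * \<kappa> * Q"
    using mult_left_mono[OF \<kappa>(2), of "2 * \<kappa> * Q"] \<kappa>(1) Q_nonneg
    by (simp add: power2_eq_square mult_ac)
  ultimately show ?thesis using step unfolding inner by (simp add: algebra_simps)
qed

definition cost :: "(nat \<Rightarrow> real) \<Rightarrow> real" where
  "cost \<beta> = (\<Sum>i<m. \<beta> i * b i)"

definition recession :: "(nat \<Rightarrow> real) \<Rightarrow> bool" where
  "recession d \<longleftrightarrow> (\<forall>i<m. 0 \<le> d i) \<and> (\<forall>j<n. (\<Sum>i<m. A i j * d i) = 0) \<and> cost d = 0"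

lemma gam_shift:
  assumes "\<forall>j<n. (\<Sum>i<m. A i j * d i) = 0" "j < n"
  shows "\<gamma> \<alpha> (\<lambda>i. \<beta> i + d i) j = \<gamma> \<alpha> \<beta> j"
  using assms unfolding gam_def by (simp add: distrib_left sum.distrib)

lemma L_shift:
  assumes "\<forall>j<n. (\<Sum>i<m. A i j * d i) = 0"
  shows "L z \<alpha> (\<lambda>i. \<beta> i + d i) = L z \<alpha> \<beta> - cost d"
proof -
  have "(\<Sum>j<n. z j * (\<gamma> \<alpha> (\<lambda>i. \<beta> i + d i) j)\<^sup>2) = (\<Sum>j<n. z j * (\<gamma> \<alpha> \<beta> j)\<^sup>2)"
    using gam_shift[OF assms] by simp
  moreover have "(\<Sum>i<m. (\<beta> i + d i) * b i) = (\<Sum>i<m. \<beta> i * b i) + cost d"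
    unfolding cost_def by (simp add: distrib_right sum.distrib)
  ultimately show ?thesis unfolding Lfun_def by simp
qed

lemma fdual_shift:
  assumes "\<forall>j<n. (\<Sum>i<m. A i j * d i) = 0"
  shows "F \<alpha> (\<lambda>i. \<beta> i + d i) = F \<alpha> \<beta> - cost d"
proof -
  obtain z1 where z1: "z1 \<in> Zs n s" "F \<alpha> (\<lambda>i. \<beta> i + d i) = L z1 \<alpha> (\<lambda>i. \<beta> i + d i)"
    using fdual_attained by blast
  obtain z0 where z0: "z0 \<in> Zs n s" "F \<alpha> \<beta> = L z0 \<alpha> \<beta>"
    using fdual_attained by blast
  show ?thesis
    using fdual_le[OF z1(1), of \<alpha> \<beta>] fdual_le[OF z0(1), of \<alpha> "\<lambda>i. \<beta> i + d i"] z0(2) z1(2)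
      L_shift[OF assms, of z0 \<alpha> \<beta>] L_shift[OF assms, of z1 \<alpha> \<beta>]
    by linarith
qed

lemma recession_cost_zero: "recession d \<Longrightarrow> cost d = 0"
  unfolding recession_def by simp

lemma recession_zero: "recession (\<lambda>_. 0)"
  unfolding recession_def cost_def by simp

lemma recession_add_scaled:
  assumes "recession d" "recession d'" "0 \<le> t"
  shows "recession (\<lambda>i. t * d i + d' i)"
proof -
  have "(\<Sum>i<m. A i j * (t * d i + d' i)) = t * (\<Sum>i<m. A i j * d i) + (\<Sum>i<m. A i j * d' i)" for j
    by (simp add: sum.distrib sum_distrib_left algebra_simps)
  moreover have "cost (\<lambda>i. t * d i + d' i) = t * cost d + cost d'"
    unfolding cost_def by (simp add: sum.distrib sum_distrib_left algebra_simps)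
  ultimately show ?thesis using assms unfolding recession_def by simp
qed

lemma fdual_recession_shift:
  assumes "recession d"
  shows "F \<alpha> (\<lambda>i. \<beta> i - t * d i) = F \<alpha> \<beta>"
proof -
  have "(\<Sum>i<m. A i j * (- t * d i)) = - t * (\<Sum>i<m. A i j * d i)" for j
    by (simp add: sum_distrib_left algebra_simps)
  then have "\<forall>j<n. (\<Sum>i<m. A i j * (- t * d i)) = 0"
    using assms unfolding recession_def by simp
  moreover have "cost (\<lambda>i. - t * d i) = - t * cost d"
    unfolding cost_def by (simp add: sum_distrib_left algebra_simps)
  ultimately show ?thesis
    using fdual_shift[of "\<lambda>i. - t * d i" \<alpha> \<beta>] recession_cost_zero[OF assms] by simp
qed

lemma grad_recession_shift:
  assumes "recession d"
  shows "grad_a z \<alpha> (\<lambda>i. \<beta> i - d i) = grad_a z \<alpha> \<beta>" "grad_b z \<alpha> (\<lambda>i. \<beta> i - d i) = grad_b z \<alpha> \<beta>"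
proof -
  have "\<forall>j<n. (\<Sum>i<m. A i j * (- d i)) = 0"
    using assms unfolding recession_def by (simp add: sum_negf)
  then have "\<gamma> \<alpha> (\<lambda>i. \<beta> i - d i) j = \<gamma> \<alpha> \<beta> j" if "j < n" for j
    using gam_shift[of "\<lambda>i. - d i" j] that by simp
  then show "grad_a z \<alpha> (\<lambda>i. \<beta> i - d i) = grad_a z \<alpha> \<beta>" "grad_b z \<alpha> (\<lambda>i. \<beta> i - d i) = grad_b z \<alpha> \<beta>"
    unfolding grad_a_def grad_b_def by auto
qed

lemma fdual_le_gam:
  assumes "j < n"
  shows "F \<alpha> \<beta> \<le> - cost \<beta> - (\<Sum>i<k. (\<alpha> i)\<^sup>2) / 4 - \<eta> / 4 * (\<gamma> \<alpha> \<beta> j)\<^sup>2"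
proof -
  have "indicator {j} \<in> Zs n s" using assms s_pos by (intro indicator_in_Zs) auto
  from fdual_le[OF this, of \<alpha> \<beta>] show ?thesis
    using sum_indicator_weight[of "{j}" "\<lambda>l. (\<gamma> \<alpha> \<beta> l)\<^sup>2"] assms
    unfolding Lfun_def cost_def by simp
qed

lemma fdual_le_quadratic: "F \<alpha> \<beta> \<le> - cost \<beta> - (\<Sum>i<k. (\<alpha> i)\<^sup>2) / 4"
  using fdual_le[OF zero_in_Zs, of \<alpha> \<beta>] unfolding Lfun_def cost_def by simp

lemma abs_cost_le: "\<forall>i<m. \<bar>\<beta> i\<bar> \<le> \<rho> \<Longrightarrow> \<bar>cost \<beta>\<bar> \<le> (\<Sum>i<m. \<bar>b i\<bar>) * \<rho>"
  unfolding cost_def sum_distrib_right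
  by (rule order_trans[OF sum_abs sum_mono]) (auto simp: abs_mult mult.commute intro: mult_right_mono)

lemma tendsto_gam:
  assumes "\<forall>i<k. (\<lambda>j. a j i) \<longlonglongrightarrow> a0 i" "\<forall>i<m. (\<lambda>j. p j i) \<longlonglongrightarrow> p0 i"
  shows "(\<lambda>j. \<gamma> (a j) (p j) l) \<longlonglongrightarrow> \<gamma> a0 p0 l"
  unfolding gam_def by (intro tendsto_intros) (use assms in auto)

lemma tendsto_L:
  assumes "\<forall>i<k. (\<lambda>j. a j i) \<longlonglongrightarrow> a0 i" "\<forall>i<m. (\<lambda>j. p j i) \<longlonglongrightarrow> p0 i"
  shows "(\<lambda>j. L z (a j) (p j)) \<longlonglongrightarrow> L z a0 p0"
  unfolding Lfun_def by (intro tendsto_intros tendsto_gam[OF assms]) (use assms in auto)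

lemma tendsto_sqdist_zero:
  assumes "\<forall>i<k. (\<lambda>j. a j i) \<longlonglongrightarrow> a0 i" "\<forall>i<m. (\<lambda>j. p j i) \<longlonglongrightarrow> p0 i"
  shows "(\<lambda>j. sqdist (a j) (p j) a0 p0) \<longlonglongrightarrow> 0"
proof -
  have "(\<lambda>j. sqdist (a j) (p j) a0 p0) \<longlonglongrightarrow> (\<Sum>i<k. (a0 i - a0 i)\<^sup>2) + (\<Sum>i<m. (p0 i - p0 i)\<^sup>2)"
    unfolding sqnorm_def by (intro tendsto_intros) (use assms in auto)
  then show ?thesis by simp
qed

lemma bounded_sqnorm_convergent_subseq:
  fixes a p :: "nat \<Rightarrow> nat \<Rightarrow> real"
  assumes "\<forall>j. sqnorm (a j) (p j) \<le> R"
  obtains r a0 p0 where "strict_mono r" "\<forall>i<k. (\<lambda>j. a (r j) i) \<longlonglongrightarrow> a0 i"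
    "\<forall>i<m. (\<lambda>j. p (r j) i) \<longlonglongrightarrow> p0 i"
proof -
  have abs_le: "\<bar>x\<bar> \<le> 1 + R" if "x\<^sup>2 \<le> R" for x :: real
    using that abs_le_one_plus_square[of x] by linarith
  have "\<forall>j. \<forall>i<k. \<bar>a j i\<bar> \<le> 1 + R"
    using assms sqnorm_coord_le(1) abs_le order_trans by metis
  then obtain r1 a0 where r1: "strict_mono r1" and a0: "\<forall>i<k. (\<lambda>j. a (r1 j) i) \<longlonglongrightarrow> a0 i"
    using bounded_coords_convergent_subseq by blast
  have "\<forall>j. \<forall>i<m. \<bar>p (r1 j) i\<bar> \<le> 1 + R"
    using assms sqnorm_coord_le(2) abs_le order_trans by metis
  then obtain r2 p0 where r2: "strict_mono r2" and p0: "\<forall>i<m. (\<lambda>j. p (r1 (r2 j)) i) \<longlonglongrightarrow> p0 i"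
    using bounded_coords_convergent_subseq[of m "\<lambda>j. p (r1 j)"] by blast
  have "\<forall>i<k. (\<lambda>j. a (r1 (r2 j)) i) \<longlonglongrightarrow> a0 i"
    using a0 LIMSEQ_subseq_LIMSEQ[OF _ r2] by (auto simp: o_def)
  then show ?thesis
    using that[of "r1 \<circ> r2" a0 p0] strict_mono_o[OF r1 r2] p0 by (simp add: o_def)
qed

lemma kernel_of_scaled_limit:
  assumes \<alpha>_scaled: "\<forall>i<k. (\<lambda>j. aq j i / \<rho> j) \<longlonglongrightarrow> 0"
    and \<gamma>_scaled: "\<forall>l<n. (\<lambda>j. \<gamma> (aq j) (bq j) l / \<rho> j) \<longlonglongrightarrow> 0"
    and inv: "(\<lambda>j. 1 / \<rho> j) \<longlonglongrightarrow> 0" and dl: "\<forall>i<m. (\<lambda>j. bq j i / \<rho> j) \<longlonglongrightarrow> dl i"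
  shows "\<forall>l<n. (\<Sum>i<m. A i l * dl i) = 0"
proof (intro allI impI)
  fix l assume "l < n"
  have "(\<Sum>i<m. A i l * (bq j i / \<rho> j)) = \<gamma> (aq j) (bq j) l / \<rho> j - c l * (1 / \<rho> j)
      - (\<Sum>i<k. v i l * sqrt (lam i) * (aq j i / \<rho> j))" for j
    unfolding gam_def
    by (simp add: sum_divide_distrib[symmetric] add_divide_distrib diff_divide_distrib mult.assoc)
  moreover have "(\<lambda>j. \<gamma> (aq j) (bq j) l / \<rho> j - c l * (1 / \<rho> j)
      - (\<Sum>i<k. v i l * sqrt (lam i) * (aq j i / \<rho> j))) \<longlonglongrightarrow> 0 - c l * 0 - (\<Sum>i<k. v i l * sqrt (lam i) * 0)"
    using \<gamma>_scaled \<open>l < n\<close> by (intro tendsto_intros inv) (use \<alpha>_scaled in auto)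
  moreover have "(\<lambda>j. \<Sum>i<m. A i l * (bq j i / \<rho> j)) \<longlonglongrightarrow> (\<Sum>i<m. A i l * dl i)"
    by (intro tendsto_intros) (use dl in auto)
  ultimately show "(\<Sum>i<m. A i l * dl i) = 0" using LIMSEQ_unique by fastforce
qed

lemma scaled_limit_nonzero:
  assumes \<rho>_eq: "\<And>j. \<rho> j = sqrt (sqnorm (aq j) (bq j))" and \<rho>_pos: "\<And>j. 0 < \<rho> j"
    and \<alpha>_scaled: "\<forall>i<k. (\<lambda>j. aq j i / \<rho> j) \<longlonglongrightarrow> 0"
    and dl: "\<forall>i<m. (\<lambda>j. bq j i / \<rho> j) \<longlonglongrightarrow> dl i"
  shows "\<exists>i<m. dl i \<noteq> 0"
proof -
  have unit: "sqnorm (\<lambda>i. aq j i / \<rho> j) (\<lambda>i. bq j i / \<rho> j) = 1" for j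
    using \<rho>_pos[of j] sqnorm_nonneg[of "aq j" "bq j"] unfolding \<rho>_eq sqnorm_def
    by (simp add: power_divide sum_divide_distrib[symmetric] add_divide_distrib[symmetric])
  have "(\<lambda>j. sqnorm (\<lambda>i. aq j i / \<rho> j) (\<lambda>i. bq j i / \<rho> j)) \<longlonglongrightarrow> sqnorm (\<lambda>_. 0) dl"
    unfolding sqnorm_def by (intro tendsto_intros) (use \<alpha>_scaled dl in auto)
  then have "(\<Sum>i<m. (dl i)\<^sup>2) = 1"
    unfolding unit by (simp add: LIMSEQ_const_iff sqnorm_def)
  then show ?thesis
  proof (rule contrapos_pp)
    assume "\<not> (\<exists>i<m. dl i \<noteq> 0)"
    then show "(\<Sum>i<m. (dl i)\<^sup>2) \<noteq> 1" by simp
  qed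
qed

end

locale sparse_dual_max = sparse_dual +
  fixes \<alpha>_opt \<beta>_opt :: "nat \<Rightarrow> real"
  assumes \<beta>_opt_nonneg: "\<forall>i<m. 0 \<le> \<beta>_opt i"
    and fdual_le_opt: "\<And>\<alpha> \<beta>. \<forall>i<m. 0 \<le> \<beta> i \<Longrightarrow> F \<alpha> \<beta> \<le> F \<alpha>_opt \<beta>_opt"
begin

definition dual_value :: real where
  "dual_value = F \<alpha>_opt \<beta>_opt"

definition optimal :: "(nat \<Rightarrow> real) \<Rightarrow> (nat \<Rightarrow> real) \<Rightarrow> bool" where
  "optimal \<alpha> \<beta> \<longleftrightarrow> (\<forall>i<m. 0 \<le> \<beta> i) \<and> dual_value \<le> F \<alpha> \<beta>"

definition level_point :: "real \<Rightarrow> nat set \<Rightarrow> (nat \<Rightarrow> real) \<Rightarrow> (nat \<Rightarrow> real) \<Rightarrow> bool" where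
  "level_point U S \<alpha> \<beta> \<longleftrightarrow> (\<forall>i<m. 0 \<le> \<beta> i) \<and> (\<forall>i<m. i \<notin> S \<longrightarrow> \<beta> i = 0) \<and> dual_value - U \<le> F \<alpha> \<beta>"

lemma fdual_le_dual_value: "\<forall>i<m. 0 \<le> \<beta> i \<Longrightarrow> F \<alpha> \<beta> \<le> dual_value"
  unfolding dual_value_def by (rule fdual_le_opt)

lemma optimal_opt: "optimal \<alpha>_opt \<beta>_opt"
  unfolding optimal_def dual_value_def using \<beta>_opt_nonneg by simp

lemma cost_nonneg_if_kernel:
  assumes "\<forall>i<m. 0 \<le> d i" "\<forall>j<n. (\<Sum>i<m. A i j * d i) = 0"
  shows "0 \<le> cost d"
  using fdual_shift[OF assms(2), of \<alpha>_opt \<beta>_opt] fdual_le_dual_value[of "\<lambda>i. \<beta>_opt i + d i" \<alpha>_opt]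
    assms(1) \<beta>_opt_nonneg unfolding dual_value_def by simp

lemma level_point_bounds:
  assumes pt: "level_point U S \<alpha> \<beta>" and \<rho>: "\<forall>i<m. \<bar>\<beta> i\<bar> \<le> \<rho>"
  defines "C \<equiv> (\<Sum>i<m. \<bar>b i\<bar>) * \<rho> + \<bar>dual_value\<bar> + U"
  shows "cost \<beta> \<le> U - dual_value"
    and "i < k \<Longrightarrow> (\<alpha> i)\<^sup>2 \<le> 4 * C"
    and "l < n \<Longrightarrow> (\<gamma> \<alpha> \<beta> l)\<^sup>2 \<le> 4 / \<eta> * C"
proof -
  have level: "dual_value - U \<le> F \<alpha> \<beta>" using pt unfolding level_point_def by simp
  have slack: "- cost \<beta> - F \<alpha> \<beta> \<le> C"
    using level abs_cost_le[OF \<rho>] unfolding C_def by linarith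
  have sum_sq: "0 \<le> (\<Sum>i<k. (\<alpha> i)\<^sup>2) / 4" by (auto intro: sum_nonneg)
  show "cost \<beta> \<le> U - dual_value" using level fdual_le_quadratic[of \<alpha> \<beta>] sum_sq by linarith
  show "(\<alpha> i)\<^sup>2 \<le> 4 * C" if "i < k"
    using member_le_sum[of i "{..<k}" "\<lambda>i. (\<alpha> i)\<^sup>2"] that fdual_le_quadratic[of \<alpha> \<beta>] slack by simp
  show "(\<gamma> \<alpha> \<beta> l)\<^sup>2 \<le> 4 / \<eta> * C" if "l < n"
    using fdual_le_gam[OF that, of \<alpha> \<beta>] slack sum_sq eta_pos by (simp add: field_simps)
qed

lemma scaled_level_limit_recession:
  fixes aq bq :: "nat \<Rightarrow> nat \<Rightarrow> real"
  assumes pts: "\<And>j. level_point U S (aq j) (bq j)"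
    and \<rho>_eq: "\<And>j. \<rho> j = sqrt (sqnorm (aq j) (bq j))" and \<rho>_pos: "\<And>j. 0 < \<rho> j"
    and \<rho>_lim: "filterlim \<rho> at_top sequentially"
    and dl: "\<forall>i<m. (\<lambda>j. bq j i / \<rho> j) \<longlonglongrightarrow> dl i"
  shows "recession dl" "\<forall>i<m. i \<notin> S \<longrightarrow> dl i = 0" "\<exists>i<m. dl i \<noteq> 0"
proof -
  have coord_le: "\<bar>x\<bar> \<le> \<rho> j" if "x\<^sup>2 \<le> sqnorm (aq j) (bq j)" for x j
    using real_sqrt_le_mono[OF that] unfolding \<rho>_eq by simp
  have \<beta>_le: "\<forall>i<m. \<bar>bq j i\<bar> \<le> \<rho> j" for j using coord_le sqnorm_coord_le(2) by blast
  define B where "B = (\<Sum>i<m. \<bar>b i\<bar>)"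
  define D where "D = \<bar>dual_value\<bar> + U"
  have \<alpha>_scaled: "(\<lambda>j. aq j i / \<rho> j) \<longlonglongrightarrow> 0" if "i < k" for i
    using level_point_bounds(2)[OF pts \<beta>_le that] \<rho>_pos \<rho>_lim
    by (intro scaled_tendsto_zero_if_square_le_linear[where B = "4 * B" and C = "4 * D"])
      (auto simp: B_def D_def algebra_simps)
  have \<gamma>_scaled: "(\<lambda>j. \<gamma> (aq j) (bq j) l / \<rho> j) \<longlonglongrightarrow> 0" if "l < n" for l
    using level_point_bounds(3)[OF pts \<beta>_le that] \<rho>_pos \<rho>_lim
    by (intro scaled_tendsto_zero_if_square_le_linear[where B = "4 / \<eta> * B" and C = "4 / \<eta> * D"])
      (auto simp: B_def D_def algebra_simps)
  have inv: "(\<lambda>j. 1 / \<rho> j) \<longlonglongrightarrow> 0"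
    using tendsto_inverse_0_at_top[OF \<rho>_lim] by (simp add: inverse_eq_divide)
  have kernel: "\<forall>l<n. (\<Sum>i<m. A i l * dl i) = 0"
    using \<alpha>_scaled \<gamma>_scaled by (intro kernel_of_scaled_limit[OF _ _ inv dl]) auto
  have nonneg: "\<forall>i<m. 0 \<le> dl i"
  proof (intro allI impI)
    fix i assume "i < m"
    show "0 \<le> dl i"
      using pts \<rho>_pos \<open>i < m\<close> unfolding level_point_def
      by (intro LIMSEQ_le_const[OF dl[rule_format, OF \<open>i < m\<close>]]) (simp add: less_imp_le)
  qed
  show supp: "\<forall>i<m. i \<notin> S \<longrightarrow> dl i = 0"
  proof (intro allI impI)
    fix i assume i: "i < m" "i \<notin> S"
    then have "(\<lambda>j. bq j i / \<rho> j) = (\<lambda>_. 0)" using pts unfolding level_point_def by auto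
    then show "dl i = 0" using dl i LIMSEQ_unique tendsto_const by metis
  qed
  have "cost dl \<le> 0"
  proof (rule LIMSEQ_le)
    have "cost (bq j) * (1 / \<rho> j) = (\<Sum>i<m. bq j i / \<rho> j * b i)" for j
      unfolding cost_def sum_distrib_right by simp
    moreover have "(\<lambda>j. \<Sum>i<m. bq j i / \<rho> j * b i) \<longlonglongrightarrow> cost dl"
      unfolding cost_def by (intro tendsto_intros) (use dl in auto)
    ultimately show "(\<lambda>j. cost (bq j) * (1 / \<rho> j)) \<longlonglongrightarrow> cost dl" by simp
    show "(\<lambda>j. (U - dual_value) * (1 / \<rho> j)) \<longlonglongrightarrow> 0"
      using tendsto_mult_left[OF inv] by simp
    have "cost (bq j) * (1 / \<rho> j) \<le> (U - dual_value) * (1 / \<rho> j)" for j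
      using level_point_bounds(1)[OF pts \<beta>_le, of j] \<rho>_pos[of j] by (intro mult_right_mono) auto
    then show "\<exists>N. \<forall>j\<ge>N. cost (bq j) * (1 / \<rho> j) \<le> (U - dual_value) * (1 / \<rho> j)" by blast
  qed
  then show "recession dl"
    using cost_nonneg_if_kernel[OF nonneg kernel] nonneg kernel unfolding recession_def by simp
  show "\<exists>i<m. dl i \<noteq> 0"
    using \<alpha>_scaled by (intro scaled_limit_nonzero[OF \<rho>_eq \<rho>_pos _ dl]) auto
qed

lemma bounded_level_set_or_recession:
  "(\<exists>R. \<forall>\<alpha> \<beta>. level_point U S \<alpha> \<beta> \<longrightarrow> sqnorm \<alpha> \<beta> \<le> R)
   \<or> (\<exists>d. recession d \<and> (\<forall>i<m. i \<notin> S \<longrightarrow> d i = 0) \<and> (\<exists>i<m. d i \<noteq> 0))"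
proof (cases "\<exists>R. \<forall>\<alpha> \<beta>. level_point U S \<alpha> \<beta> \<longrightarrow> sqnorm \<alpha> \<beta> \<le> R")
  case False
  then have "\<forall>j::nat. \<exists>\<alpha> \<beta>. level_point U S \<alpha> \<beta> \<and> real j < sqnorm \<alpha> \<beta>"
    by (meson not_le)
  then obtain aq bq where pts: "\<And>j. level_point U S (aq j) (bq j)"
    and big: "\<And>j. real j < sqnorm (aq j) (bq j)"
    by metis
  define \<rho> where "\<rho> j = sqrt (sqnorm (aq j) (bq j))" for j
  have \<rho>_pos: "0 < \<rho> j" for j
    unfolding \<rho>_def using big[of j] by (simp add: order.strict_trans1)
  have "filterlim (\<lambda>j. sqnorm (aq j) (bq j)) at_top sequentially"
    using big by (intro filterlim_at_top_mono[OF filterlim_real_sequentially] always_eventually)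
      (auto intro: less_imp_le)
  then have \<rho>_lim: "filterlim \<rho> at_top sequentially"
    unfolding \<rho>_def by (rule filterlim_compose[OF sqrt_at_top])
  have "\<bar>bq j i\<bar> \<le> \<rho> j" if "i < m" for i j
    using real_sqrt_le_mono[OF sqnorm_coord_le(2)[OF that]] unfolding \<rho>_def by simp
  then have "\<forall>j. \<forall>i<m. \<bar>bq j i / \<rho> j\<bar> \<le> 1"
    using \<rho>_pos by (simp add: divide_le_eq_1 less_imp_le)
  then obtain r dl where r: "strict_mono r" and dl: "\<forall>i<m. (\<lambda>j. bq (r j) i / \<rho> (r j)) \<longlonglongrightarrow> dl i"
    using bounded_coords_convergent_subseq[of m "\<lambda>j i. bq j i / \<rho> j"] by blast
  have "filterlim (\<lambda>j. \<rho> (r j)) at_top sequentially"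
    using filterlim_compose[OF \<rho>_lim filterlim_subseq[OF r]] by (simp add: o_def)
  from scaled_level_limit_recession[where aq = "\<lambda>j. aq (r j)" and bq = "\<lambda>j. bq (r j)",
      OF pts _ \<rho>_pos this dl]
  have "recession dl" "\<forall>i<m. i \<notin> S \<longrightarrow> dl i = 0" "\<exists>i<m. dl i \<noteq> 0"
    unfolding \<rho>_def by simp_all
  then show ?thesis by blast
qed simp

(* Induction on the support S: unless the level set on S is bounded, some nonzero recession
   direction is supported in S, and moving beta along it until a coordinate vanishes reaches a
   smaller support without changing F. *)
lemma level_set_bounded_modulo_recession_on:
  assumes "finite S"
  shows "\<exists>R. \<forall>\<alpha> \<beta>. level_point U S \<alpha> \<beta> \<longrightarrow>
           (\<exists>d. recession d \<and> (\<forall>i<m. d i \<le> \<beta> i) \<and> sqnorm \<alpha> (\<lambda>i. \<beta> i - d i) \<le> R)"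
  using assms
proof (induction S rule: finite_psubset_induct)
  case (psubset S)
  consider (bounded) R where "\<forall>\<alpha> \<beta>. level_point U S \<alpha> \<beta> \<longrightarrow> sqnorm \<alpha> \<beta> \<le> R"
    | (recession) dl where "recession dl" "\<forall>i<m. i \<notin> S \<longrightarrow> dl i = 0" "\<exists>i<m. dl i \<noteq> 0"
    using bounded_level_set_or_recession by blast
  then show ?case
  proof cases
    case bounded
    then show ?thesis
      using recession_zero unfolding level_point_def by (intro exI[of _ R]) auto
  next
    case recession
    have "\<forall>i\<in>S. \<exists>R. \<forall>\<alpha> \<beta>. level_point U (S - {i}) \<alpha> \<beta> \<longrightarrow>
           (\<exists>d. recession d \<and> (\<forall>i<m. d i \<le> \<beta> i) \<and> sqnorm \<alpha> (\<lambda>i. \<beta> i - d i) \<le> R)"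
      using psubset.IH by blast
    then obtain Rs where Rs: "\<And>i \<alpha> \<beta>. i \<in> S \<Longrightarrow> level_point U (S - {i}) \<alpha> \<beta> \<Longrightarrow>
           \<exists>d. recession d \<and> (\<forall>i<m. d i \<le> \<beta> i) \<and> sqnorm \<alpha> (\<lambda>i. \<beta> i - d i) \<le> Rs i"
      by metis
    have Rs_le: "Rs i \<le> (\<Sum>i\<in>S. \<bar>Rs i\<bar>)" if "i \<in> S" for i
      using member_le_sum[OF that, of "\<lambda>i. \<bar>Rs i\<bar>"] psubset.hyps by simp
    show ?thesis
    proof (intro exI[of _ "\<Sum>i\<in>S. \<bar>Rs i\<bar>"] allI impI)
      fix \<alpha> \<beta> assume pt: "level_point U S \<alpha> \<beta>"
      obtain t i0 where t: "0 \<le> t" "i0 \<in> S" "\<forall>i<m. 0 \<le> \<beta> i - t * dl i"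
        "\<forall>i<m. i \<notin> S - {i0} \<longrightarrow> \<beta> i - t * dl i = 0"
        using reduce_support[of m dl S \<beta>] recession pt unfolding level_point_def recession_def by blast
      have "level_point U (S - {i0}) \<alpha> (\<lambda>i. \<beta> i - t * dl i)"
        using pt t fdual_recession_shift[OF recession(1)] unfolding level_point_def by simp
      then obtain d' where d': "recession d'" "\<forall>i<m. d' i \<le> \<beta> i - t * dl i"
        "sqnorm \<alpha> (\<lambda>i. \<beta> i - t * dl i - d' i) \<le> Rs i0"
        using Rs[OF t(2)] by blast
      show "\<exists>d. recession d \<and> (\<forall>i<m. d i \<le> \<beta> i) \<and> sqnorm \<alpha> (\<lambda>i. \<beta> i - d i) \<le> (\<Sum>i\<in>S. \<bar>Rs i\<bar>)"
      proof (intro exI conjI)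
        show "recession (\<lambda>i. t * dl i + d' i)" by (rule recession_add_scaled[OF recession(1) d'(1) t(1)])
        show "\<forall>i<m. t * dl i + d' i \<le> \<beta> i" using d'(2) by auto
        show "sqnorm \<alpha> (\<lambda>i. \<beta> i - (t * dl i + d' i)) \<le> (\<Sum>i\<in>S. \<bar>Rs i\<bar>)"
          using d'(3) Rs_le[OF t(2)] by (simp add: algebra_simps)
      qed
    qed
  qed
qed

lemma level_set_bounded_modulo_recession:
  "\<exists>R. \<forall>\<alpha> \<beta>. (\<forall>i<m. 0 \<le> \<beta> i) \<and> dual_value - U \<le> F \<alpha> \<beta> \<longrightarrow>
     (\<exists>d. recession d \<and> (\<forall>i<m. d i \<le> \<beta> i) \<and> sqnorm \<alpha> (\<lambda>i. \<beta> i - d i) \<le> R)"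
  using level_set_bounded_modulo_recession_on[of "{..<m}" U] unfolding level_point_def by simp

lemma maximizing_seq_optimal_limit:
  fixes aq bq :: "nat \<Rightarrow> nat \<Rightarrow> real"
  assumes feas: "\<And>j. \<forall>i<m. 0 \<le> bq j i" and bounded: "\<And>j. sqnorm (aq j) (bq j) \<le> R"
    and maxim: "\<And>j. dual_value - e j \<le> F (aq j) (bq j)" and e: "e \<longlonglongrightarrow> 0"
  obtains r a0 b0 where "strict_mono r" "optimal a0 b0"
    "(\<lambda>j. sqdist (aq (r j)) (bq (r j)) a0 b0) \<longlonglongrightarrow> 0"
proof -
  obtain r a0 b0 where r: "strict_mono r" and a0: "\<forall>i<k. (\<lambda>j. aq (r j) i) \<longlonglongrightarrow> a0 i"
    and b0: "\<forall>i<m. (\<lambda>j. bq (r j) i) \<longlonglongrightarrow> b0 i"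
    using bounded_sqnorm_convergent_subseq[of aq bq R] bounded by blast
  have b0_nonneg: "\<forall>i<m. 0 \<le> b0 i"
    using b0 feas by (auto intro: LIMSEQ_le_const)
  have "(\<lambda>j. e (r j)) \<longlonglongrightarrow> 0"
    using LIMSEQ_subseq_LIMSEQ[OF e r] by (simp add: o_def)
  then have lim: "(\<lambda>j. dual_value - e (r j)) \<longlonglongrightarrow> dual_value"
    using tendsto_diff[OF tendsto_const] by fastforce
  have "dual_value \<le> L z a0 b0" if "z \<in> Zs n s" for z
    using maxim fdual_le[OF that] order_trans
    by (intro LIMSEQ_le[OF lim tendsto_L[OF a0 b0]]) blast
  then have "optimal a0 b0"
    using fdual_attained[of a0 b0] b0_nonneg unfolding optimal_def by auto
  with r show ?thesis using that tendsto_sqdist_zero[OF a0 b0] by blast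
qed

lemma maximizing_seq_approaches_optimal:
  fixes aq bq :: "nat \<Rightarrow> nat \<Rightarrow> real"
  assumes feas: "\<And>j. \<forall>i<m. 0 \<le> bq j i" and near: "\<And>j. dual_value - e j \<le> F (aq j) (bq j)"
    and e: "e \<longlonglongrightarrow> 0" "\<And>j. e j \<le> 1" and "0 < \<delta>"
  obtains j ya yb where "optimal ya yb" "sqdist (aq j) (bq j) ya yb < \<delta>"
proof -
  obtain R where R: "\<forall>\<alpha> \<beta>. (\<forall>i<m. 0 \<le> \<beta> i) \<and> dual_value - 1 \<le> F \<alpha> \<beta> \<longrightarrow>
      (\<exists>d. recession d \<and> (\<forall>i<m. d i \<le> \<beta> i) \<and> sqnorm \<alpha> (\<lambda>i. \<beta> i - d i) \<le> R)"
    using level_set_bounded_modulo_recession by blast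
  have "\<forall>j. \<exists>d. recession d \<and> (\<forall>i<m. d i \<le> bq j i) \<and> sqnorm (aq j) (\<lambda>i. bq j i - d i) \<le> R"
  proof
    fix j
    have "dual_value - 1 \<le> F (aq j) (bq j)" using near[of j] e(2)[of j] by linarith
    then show "\<exists>d. recession d \<and> (\<forall>i<m. d i \<le> bq j i) \<and> sqnorm (aq j) (\<lambda>i. bq j i - d i) \<le> R"
      using R feas by blast
  qed
  from choice[OF this] obtain dq where
    "\<forall>j. recession (dq j) \<and> (\<forall>i<m. dq j i \<le> bq j i) \<and> sqnorm (aq j) (\<lambda>i. bq j i - dq j i) \<le> R" ..
  then have dq: "\<And>j. recession (dq j)" "\<And>j. \<forall>i<m. dq j i \<le> bq j i"
    "\<And>j. sqnorm (aq j) (\<lambda>i. bq j i - dq j i) \<le> R"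
    by blast+
  define cq where "cq j i = bq j i - dq j i" for j i
  have "dual_value - e j \<le> F (aq j) (cq j)" for j
    using near[of j] fdual_recession_shift[OF dq(1)[of j], of "aq j" "bq j" 1] unfolding cq_def by simp
  moreover have "\<forall>i<m. 0 \<le> cq j i" "sqnorm (aq j) (cq j) \<le> R" for j
    using dq(2,3) unfolding cq_def by (auto simp: cq_def)
  ultimately obtain r a0 b0 where opt: "optimal a0 b0"
    and close: "(\<lambda>j. sqdist (aq (r j)) (cq (r j)) a0 b0) \<longlonglongrightarrow> 0"
    using maximizing_seq_optimal_limit[of cq aq R e] e(1) by blast
  obtain j where "sqdist (aq (r j)) (cq (r j)) a0 b0 < \<delta>"
    using order_tendstoD(2)[OF close \<open>0 < \<delta>\<close>] by (auto dest: eventually_happens)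
  moreover have "optimal a0 (\<lambda>i. b0 i + dq (r j) i)"
    using opt dq(1)[of "r j"] fdual_recession_shift[OF dq(1)[of "r j"], of a0 b0 "-1"]
    unfolding optimal_def recession_def by simp
  ultimately show ?thesis
    using that[of a0 "\<lambda>i. b0 i + dq (r j) i" "r j"] unfolding cq_def by (simp add: algebra_simps)
qed

lemma near_optimal_close_to_optimal:
  assumes "0 < \<delta>"
  obtains \<epsilon> where "0 < \<epsilon>"
    "\<And>\<alpha> \<beta>. \<forall>i<m. 0 \<le> \<beta> i \<Longrightarrow> dual_value - \<epsilon> < F \<alpha> \<beta> \<Longrightarrow>
       \<exists>ya yb. optimal ya yb \<and> sqdist \<alpha> \<beta> ya yb < \<delta>"
proof -
  have "\<exists>\<epsilon>>0. \<forall>\<alpha> \<beta>. (\<forall>i<m. 0 \<le> \<beta> i) \<and> dual_value - \<epsilon> < F \<alpha> \<beta> \<longrightarrow>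
          (\<exists>ya yb. optimal ya yb \<and> sqdist \<alpha> \<beta> ya yb < \<delta>)"
  proof (rule ccontr)
    assume neg: "\<not> ?thesis"
    define far where "far j \<alpha> \<beta> \<longleftrightarrow> (\<forall>i<m. 0 \<le> \<beta> i) \<and> dual_value - inverse (real (Suc j)) < F \<alpha> \<beta>
        \<and> (\<forall>ya yb. optimal ya yb \<longrightarrow> \<delta> \<le> sqdist \<alpha> \<beta> ya yb)" for j \<alpha> \<beta>
    have "\<exists>\<alpha> \<beta>. far j \<alpha> \<beta>" for j
    proof -
      have "0 < inverse (real (Suc j))" by simp
      with neg obtain \<alpha> \<beta> where "(\<forall>i<m. 0 \<le> \<beta> i) \<and> dual_value - inverse (real (Suc j)) < F \<alpha> \<beta>"
        and "\<not> (\<exists>ya yb. optimal ya yb \<and> sqdist \<alpha> \<beta> ya yb < \<delta>)"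
        by blast
      then show ?thesis unfolding far_def by (meson not_less)
    qed
    then obtain aq bq where "\<And>j. far j (aq j) (bq j)" by metis
    then have feas: "\<And>j. \<forall>i<m. 0 \<le> bq j i"
      and near: "\<And>j. dual_value - inverse (real (Suc j)) \<le> F (aq j) (bq j)"
      and away: "\<And>j ya yb. optimal ya yb \<Longrightarrow> \<delta> \<le> sqdist (aq j) (bq j) ya yb"
      unfolding far_def by (auto intro: less_imp_le)
    obtain j ya yb where "optimal ya yb" "sqdist (aq j) (bq j) ya yb < \<delta>"
      by (rule maximizing_seq_approaches_optimal[OF feas near LIMSEQ_inverse_real_of_nat _ \<open>0 < \<delta>\<close>]) (simp add: inverse_le_1_iff)
    with away show False by (simp add: not_le[symmetric])
  qed
  then show ?thesis using that by blast
qed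

lemma grad_bounded_on_optimal:
  obtains G where "0 \<le> G" "\<And>z ya yb. z \<in> Zs n s \<Longrightarrow> optimal ya yb \<Longrightarrow> grad_sqnorm z ya yb \<le> G"
proof -
  obtain R where R: "\<forall>\<alpha> \<beta>. (\<forall>i<m. 0 \<le> \<beta> i) \<and> dual_value - 0 \<le> F \<alpha> \<beta> \<longrightarrow>
      (\<exists>d. recession d \<and> (\<forall>i<m. d i \<le> \<beta> i) \<and> sqnorm \<alpha> (\<lambda>i. \<beta> i - d i) \<le> R)"
    using level_set_bounded_modulo_recession by blast
  define G0 where "G0 = (\<Sum>z\<in>Zs n s. grad_sqnorm z (\<lambda>_. 0) (\<lambda>_. 0))"
  define G where "G = 2 * lip * ((1/4 + \<eta> / 2 * frob2) * max 0 R) + 2 * G0"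
  have "grad_sqnorm z ya yb \<le> G" if z: "z \<in> Zs n s" and opt: "optimal ya yb" for z ya yb
  proof -
    have "\<exists>d. recession d \<and> (\<forall>i<m. d i \<le> yb i) \<and> sqnorm ya (\<lambda>i. yb i - d i) \<le> R"
      using R opt unfolding optimal_def by simp
    then obtain d where d: "recession d" and small: "sqnorm ya (\<lambda>i. yb i - d i) \<le> R" by blast
    define yb' where "yb' i = yb i - d i" for i
    have "curv z ya yb' (\<lambda>_. 0) (\<lambda>_. 0) \<le> (1/4 + \<eta> / 2 * frob2) * sqnorm ya yb'"
      using curv_le[OF z, of ya yb' "\<lambda>_. 0" "\<lambda>_. 0"] by (simp add: sqnorm_def)
    also have "\<dots> \<le> (1/4 + \<eta> / 2 * frob2) * max 0 R"
      using small eta_pos frob2_nonneg unfolding yb'_def by (intro mult_left_mono) auto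
    finally have "2 * lip * curv z ya yb' (\<lambda>_. 0) (\<lambda>_. 0) \<le> 2 * lip * ((1/4 + \<eta> / 2 * frob2) * max 0 R)"
      using lip_pos by simp
    moreover have "grad_sqnorm z (\<lambda>_. 0) (\<lambda>_. 0) \<le> G0"
      unfolding G0_def using z finite_Zs sqnorm_nonneg by (intro member_le_sum) auto
    moreover have "grad_sqnorm z ya yb = grad_sqnorm z ya yb'"
      using grad_recession_shift[OF d] unfolding yb'_def by simp
    ultimately show ?thesis
      using grad_sqnorm_le[OF z, of ya yb' "\<lambda>_. 0" "\<lambda>_. 0"] unfolding G_def by linarith
  qed
  moreover have "0 \<le> G"
    unfolding G_def G0_def using lip_pos eta_pos frob2_nonneg sqnorm_nonneg
    by (intro add_nonneg_nonneg mult_nonneg_nonneg sum_nonneg) auto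
  ultimately show ?thesis using that by blast
qed

lemma dual_gap_le:
  assumes z: "z \<in> Zs n s" and active: "F \<alpha> \<beta> = L z \<alpha> \<beta>" and opt: "optimal ya yb"
    and "0 < \<theta>"
  shows "dual_value - F \<alpha> \<beta> \<le> (\<theta> * lip * (1/4 + \<eta> / 2 * frob2) + 1 / (2 * \<theta>)) * sqdist \<alpha> \<beta> ya yb
           + \<theta> * grad_sqnorm z ya yb"
proof -
  define r where "r = sqdist \<alpha> \<beta> ya yb"
  define Q where "Q = curv z \<alpha> \<beta> ya yb"
  have "dual_value \<le> L z ya yb"
    using opt fdual_le[OF z, of ya yb] unfolding optimal_def by linarith
  also have "\<dots> = F \<alpha> \<beta> + inner_pair (grad_a z \<alpha> \<beta>) (grad_b z \<alpha> \<beta>) (\<lambda>i. ya i - \<alpha> i) (\<lambda>i. yb i - \<beta> i) - Q"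
    unfolding active Q_def by (rule L_taylor)
  also have "inner_pair (grad_a z \<alpha> \<beta>) (grad_b z \<alpha> \<beta>) (\<lambda>i. ya i - \<alpha> i) (\<lambda>i. yb i - \<beta> i)
      \<le> \<theta> / 2 * grad_sqnorm z \<alpha> \<beta> + 1 / (2 * \<theta>) * r"
    unfolding r_def sqdist_commute[of \<alpha>] by (rule inner_pair_le[OF \<open>0 < \<theta>\<close>])
  finally have gap: "dual_value - F \<alpha> \<beta> \<le> \<theta> / 2 * grad_sqnorm z \<alpha> \<beta> + 1 / (2 * \<theta>) * r"
    using curv_nonneg[OF z, of \<alpha> \<beta> ya yb] unfolding Q_def by linarith
  have "grad_sqnorm z \<alpha> \<beta> \<le> 2 * lip * ((1/4 + \<eta> / 2 * frob2) * r) + 2 * grad_sqnorm z ya yb"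
    using grad_sqnorm_le[OF z, of \<alpha> \<beta> ya yb] curv_le[OF z, of \<alpha> \<beta> ya yb] lip_pos
    unfolding r_def sqdist_commute[of ya] by (smt (verit) mult_left_mono)
  then have "\<theta> / 2 * grad_sqnorm z \<alpha> \<beta> \<le> \<theta> / 2 * (2 * lip * ((1/4 + \<eta> / 2 * frob2) * r) + 2 * grad_sqnorm z ya yb)"
    using \<open>0 < \<theta>\<close> by (intro mult_left_mono) auto
  with gap show ?thesis unfolding r_def by (simp add: algebra_simps)
qed

lemma close_to_optimal_near_optimal:
  assumes "0 < \<epsilon>"
  obtains \<delta> where "0 < \<delta>"
    "\<And>\<alpha> \<beta> ya yb z. z \<in> Zs n s \<Longrightarrow> F \<alpha> \<beta> = L z \<alpha> \<beta> \<Longrightarrow> optimal ya yb \<Longrightarrow>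
       sqdist \<alpha> \<beta> ya yb < \<delta> \<Longrightarrow> dual_value - F \<alpha> \<beta> < \<epsilon>"
proof -
  obtain G where G: "0 \<le> G" "\<And>z ya yb. z \<in> Zs n s \<Longrightarrow> optimal ya yb \<Longrightarrow> grad_sqnorm z ya yb \<le> G"
    using grad_bounded_on_optimal by blast
  define \<theta> where "\<theta> = \<epsilon> / (2 * (G + 1))"
  define M where "M = \<theta> * lip * (1/4 + \<eta> / 2 * frob2) + 1 / (2 * \<theta>)"
  have \<theta>_pos: "0 < \<theta>" unfolding \<theta>_def using assms G(1) by simp
  have M_pos: "0 < M" unfolding M_def using \<theta>_pos lip_pos eta_pos frob2_nonneg by (simp add: add_nonneg_pos)
  have \<theta>G: "\<theta> * G < \<epsilon> / 2"
    unfolding \<theta>_def using assms G(1) by (simp add: field_simps)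
  show ?thesis
  proof (rule that[of "\<epsilon> / (2 * M)"])
    show "0 < \<epsilon> / (2 * M)" using assms M_pos by simp
    fix \<alpha> \<beta> ya yb z
    assume z: "z \<in> Zs n s" and active: "F \<alpha> \<beta> = L z \<alpha> \<beta>" and opt: "optimal ya yb"
      and close: "sqdist \<alpha> \<beta> ya yb < \<epsilon> / (2 * M)"
    have "M * sqdist \<alpha> \<beta> ya yb \<le> \<epsilon> / 2"
      using close M_pos sqnorm_nonneg by (simp add: field_simps)
    moreover have "\<theta> * grad_sqnorm z ya yb \<le> \<theta> * G"
      using G(2)[OF z opt] \<theta>_pos by simp
    ultimately show "dual_value - F \<alpha> \<beta> < \<epsilon>"
      using dual_gap_le[OF z active opt \<theta>_pos] \<theta>G unfolding M_def by linarith
  qed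
qed

lemma dval_eq_dual_value: "dval n m k s lam v A b c \<eta> = dual_value"
  unfolding dval_def dual_value_def
proof (rule cSup_eq_maximum)
  show "F \<alpha>_opt \<beta>_opt \<in> (\<lambda>p. F (fst p) (snd p)) ` dual_feas m"
    using \<beta>_opt_nonneg by (intro image_eqI[of _ _ "(\<alpha>_opt, \<beta>_opt)"]) (auto simp: dual_feas_def)
qed (auto simp: dual_feas_def fdual_le_opt)

lemma dual_value_le_Jstar: "ereal dual_value \<le> Jstar n m k s lam v A b c \<eta>"
  unfolding Jstar_def
proof (rule INF_greatest)
  fix z assume "z \<in> Zs n s"
  then have "ereal dual_value \<le> ereal (L z \<alpha>_opt \<beta>_opt)"
    unfolding dual_value_def using fdual_le by simp
  also have "\<dots> \<le> inner_val n m k lam v A b c \<eta> z"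
    unfolding inner_val_def using \<beta>_opt_nonneg
    by (intro SUP_upper2[of "(\<alpha>_opt, \<beta>_opt)"]) (auto simp: dual_feas_def)
  finally show "ereal dual_value \<le> inner_val n m k lam v A b c \<eta> z" .
qed

lemma zero_duality_gap_at:
  assumes "z \<in> Zs n s" and le: "\<And>\<alpha> \<beta>. \<forall>i<m. 0 \<le> \<beta> i \<Longrightarrow> L z \<alpha> \<beta> \<le> dual_value"
  shows "inner_val n m k lam v A b c \<eta> z = Jstar n m k s lam v A b c \<eta>"
    and "ereal dual_value = Jstar n m k s lam v A b c \<eta>"
proof -
  have "inner_val n m k lam v A b c \<eta> z \<le> ereal dual_value"
    unfolding inner_val_def using le by (intro SUP_least) (auto simp: dual_feas_def)
  moreover have "Jstar n m k s lam v A b c \<eta> \<le> inner_val n m k lam v A b c \<eta> z"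
    unfolding Jstar_def using assms(1) by (rule INF_lower)
  ultimately show "inner_val n m k lam v A b c \<eta> z = Jstar n m k s lam v A b c \<eta>"
    and "ereal dual_value = Jstar n m k s lam v A b c \<eta>"
    using dual_value_le_Jstar by (meson order_antisym order_trans)+
qed

end

locale sparse_dual_iteration = sparse_dual_max +
  fixes alpha beta zeta :: "nat \<Rightarrow> nat \<Rightarrow> real" and \<kappa> :: "nat \<Rightarrow> real"
  assumes beta_nonneg: "\<And>t. \<forall>i<m. 0 \<le> beta t i"
    and zeta_in_Zs: "\<And>t. zeta t \<in> Zs n s"
    and zeta_active: "\<And>t. F (alpha t) (beta t) = L (zeta t) (alpha t) (beta t)"
    and alpha_step: "\<And>t. \<forall>i<k. alpha (Suc t) i = alpha t i + \<kappa> t * grad_a (zeta t) (alpha t) (beta t) i"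
    and beta_step: "\<And>t. \<forall>i<m. beta (Suc t) i = max 0 (beta t i + \<kappa> t * grad_b (zeta t) (alpha t) (beta t) i)"
    and \<kappa>_pos: "\<And>t. 0 < \<kappa> t" and \<kappa>_lim: "\<kappa> \<longlonglongrightarrow> 0" and \<kappa>_not_summable: "\<not> summable \<kappa>"
begin

lemma iterate_dist_step:
  assumes "\<kappa> t * lip \<le> 1" "\<forall>i<m. 0 \<le> yb i"
  shows "sqdist (alpha (Suc t)) (beta (Suc t)) ya yb \<le> sqdist (alpha t) (beta t) ya yb
           - 2 * \<kappa> t * (L (zeta t) ya yb - F (alpha t) (beta t)) + 2 * (\<kappa> t)\<^sup>2 * grad_sqnorm (zeta t) ya yb"
  unfolding zeta_active
  by (rule projected_step_estimate[OF zeta_in_Zs \<kappa>_pos assms(1) alpha_step beta_step assms(2)])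

lemma eventually_small_steps:
  assumes "0 < e" "0 \<le> G"
  obtains T where "\<And>t. t \<ge> T \<Longrightarrow> \<kappa> t * lip \<le> 1 \<and> \<kappa> t \<le> 1 \<and> 2 * \<kappa> t * G \<le> e"
proof -
  have "0 < min (1 / lip) (min 1 (e / (2 * G + 1)))" using assms lip_pos by simp
  from order_tendstoD(2)[OF \<kappa>_lim this]
  have "\<forall>\<^sub>F t in sequentially. \<kappa> t < min (1 / lip) (min 1 (e / (2 * G + 1)))" .
  then obtain T where T: "\<And>t. t \<ge> T \<Longrightarrow> \<kappa> t < min (1 / lip) (min 1 (e / (2 * G + 1)))"
    unfolding eventually_sequentially by blast
  have "\<kappa> t * lip \<le> 1 \<and> \<kappa> t \<le> 1 \<and> 2 * \<kappa> t * G \<le> e" if "t \<ge> T" for t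
  proof -
    have "\<kappa> t < 1 / lip" "\<kappa> t \<le> 1" "\<kappa> t < e / (2 * G + 1)" using T[OF that] by auto
    moreover have "2 * \<kappa> t * G \<le> \<kappa> t * (2 * G + 1)" using \<kappa>_pos[of t] by (simp add: algebra_simps)
    ultimately show ?thesis using lip_pos assms by (simp add: field_simps)
  qed
  then show ?thesis using that by blast
qed

lemma dist_step_optimal:
  assumes "0 < e"
  obtains T where "\<And>t. t \<ge> T \<Longrightarrow> \<kappa> t \<le> 1"
    "\<And>t ya yb. t \<ge> T \<Longrightarrow> optimal ya yb \<Longrightarrow> sqdist (alpha (Suc t)) (beta (Suc t)) ya yb
       \<le> sqdist (alpha t) (beta t) ya yb - 2 * \<kappa> t * (dual_value - F (alpha t) (beta t)) + \<kappa> t * e"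
proof -
  obtain G where G: "0 \<le> G" "\<And>z ya yb. z \<in> Zs n s \<Longrightarrow> optimal ya yb \<Longrightarrow> grad_sqnorm z ya yb \<le> G"
    using grad_bounded_on_optimal by blast
  obtain T where T: "\<And>t. t \<ge> T \<Longrightarrow> \<kappa> t * lip \<le> 1 \<and> \<kappa> t \<le> 1 \<and> 2 * \<kappa> t * G \<le> e"
    using eventually_small_steps[OF assms G(1)] by blast
  have "sqdist (alpha (Suc t)) (beta (Suc t)) ya yb
       \<le> sqdist (alpha t) (beta t) ya yb - 2 * \<kappa> t * (dual_value - F (alpha t) (beta t)) + \<kappa> t * e"
    if t: "t \<ge> T" and opt: "optimal ya yb" for t ya yb
  proof -
    have step: "sqdist (alpha (Suc t)) (beta (Suc t)) ya yb \<le> sqdist (alpha t) (beta t) ya yb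
        - 2 * \<kappa> t * (L (zeta t) ya yb - F (alpha t) (beta t)) + 2 * (\<kappa> t)\<^sup>2 * grad_sqnorm (zeta t) ya yb"
      using iterate_dist_step T[OF t] opt unfolding optimal_def by blast
    have "dual_value \<le> L (zeta t) ya yb"
      using opt fdual_le[OF zeta_in_Zs, of ya yb t] unfolding optimal_def by linarith
    then have "2 * \<kappa> t * (dual_value - F (alpha t) (beta t)) \<le> 2 * \<kappa> t * (L (zeta t) ya yb - F (alpha t) (beta t))"
      using \<kappa>_pos[of t] by (intro mult_left_mono) auto
    moreover have "2 * (\<kappa> t)\<^sup>2 * grad_sqnorm (zeta t) ya yb \<le> \<kappa> t * (2 * \<kappa> t * G)"
      using G(2)[OF zeta_in_Zs opt, of t] \<kappa>_pos[of t] by (simp add: power2_eq_square mult_left_mono)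
    moreover have "\<kappa> t * (2 * \<kappa> t * G) \<le> \<kappa> t * e"
      using T[OF t] \<kappa>_pos[of t] by (intro mult_left_mono) auto
    ultimately show ?thesis using step by linarith
  qed
  then show ?thesis using that T by blast
qed

lemma fdual_iterate_le: "F (alpha t) (beta t) \<le> dual_value"
  using fdual_le_dual_value[OF beta_nonneg] .

lemma eventually_constant_pattern_le_dual_value:
  assumes z: "\<And>t. t \<ge> T \<Longrightarrow> zeta t = z" and yb: "\<forall>i<m. 0 \<le> yb i"
  shows "L z ya yb \<le> dual_value"
proof (rule ccontr)
  assume "\<not> ?thesis"
  then have e: "0 < L z ya yb - dual_value" by simp
  obtain T1 where T1: "\<And>t. t \<ge> T1 \<Longrightarrow> \<kappa> t * lip \<le> 1 \<and> \<kappa> t \<le> 1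
      \<and> 2 * \<kappa> t * grad_sqnorm z ya yb \<le> L z ya yb - dual_value"
    using eventually_small_steps[OF e sqnorm_nonneg[of "grad_a z ya yb" "grad_b z ya yb"]] by blast
  have "sqdist (alpha (Suc t)) (beta (Suc t)) ya yb
      \<le> sqdist (alpha t) (beta t) ya yb - \<kappa> t * (L z ya yb - dual_value)" if t: "t \<ge> max T T1" for t
  proof -
    have "2 * \<kappa> t * (L z ya yb - dual_value) \<le> 2 * \<kappa> t * (L z ya yb - F (alpha t) (beta t))"
      using fdual_iterate_le[of t] \<kappa>_pos[of t] by (intro mult_left_mono) auto
    moreover have "2 * (\<kappa> t)\<^sup>2 * grad_sqnorm z ya yb \<le> \<kappa> t * (L z ya yb - dual_value)"
      using T1[of t] t \<kappa>_pos[of t] mult_left_mono[of "2 * \<kappa> t * grad_sqnorm z ya yb" _ "\<kappa> t"]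
      by (simp add: power2_eq_square mult_ac)
    ultimately show ?thesis
      using iterate_dist_step[of t yb ya] T1[of t] t z[of t] yb by simp
  qed
  then have "summable \<kappa>"
    using e \<kappa>_pos[THEN less_imp_le]
    by (rule descent_imp_summable[where V = "\<lambda>t. sqdist (alpha t) (beta t) ya yb", OF sqnorm_nonneg])
  with \<kappa>_not_summable show False by simp
qed

lemma frequently_near_dual_value:
  assumes "0 < \<epsilon>"
  shows "\<exists>t\<ge>T. dual_value - \<epsilon> < F (alpha t) (beta t)"
proof (rule ccontr)
  assume "\<not> ?thesis"
  then have far: "\<And>t. t \<ge> T \<Longrightarrow> F (alpha t) (beta t) \<le> dual_value - \<epsilon>" by (simp add: not_less)
  obtain T1 where "\<And>t. t \<ge> T1 \<Longrightarrow> \<kappa> t \<le> 1" and T1: "\<And>t ya yb. t \<ge> T1 \<Longrightarrow> optimal ya yb \<Longrightarrow> sqdist (alpha (Suc t)) (beta (Suc t)) ya yb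
       \<le> sqdist (alpha t) (beta t) ya yb - 2 * \<kappa> t * (dual_value - F (alpha t) (beta t)) + \<kappa> t * \<epsilon>"
    using dist_step_optimal[OF assms] by blast
  have "sqdist (alpha (Suc t)) (beta (Suc t)) \<alpha>_opt \<beta>_opt \<le> sqdist (alpha t) (beta t) \<alpha>_opt \<beta>_opt - \<kappa> t * \<epsilon>"
    if t: "t \<ge> max T T1" for t
  proof -
    have "2 * \<kappa> t * \<epsilon> \<le> 2 * \<kappa> t * (dual_value - F (alpha t) (beta t))"
      using far[of t] t \<kappa>_pos[of t] by (intro mult_left_mono) auto
    then show ?thesis using T1[of t, OF _ optimal_opt] t by simp
  qed
  then have "summable \<kappa>"
    using assms \<kappa>_pos[THEN less_imp_le]
    by (rule descent_imp_summable[where V = "\<lambda>t. sqdist (alpha t) (beta t) \<alpha>_opt \<beta>_opt", OF sqnorm_nonneg])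
  with \<kappa>_not_summable show False by simp
qed

lemma eventually_close_to_optimal:
  assumes "0 < \<delta>"
  shows "\<forall>\<^sub>F t in sequentially. \<exists>ya yb. optimal ya yb \<and> sqdist (alpha t) (beta t) ya yb < \<delta>"
proof -
  have "0 < \<delta> / 2" using assms by simp
  then obtain \<epsilon> where \<epsilon>: "0 < \<epsilon>"
    and near: "\<And>\<alpha> \<beta>. \<forall>i<m. 0 \<le> \<beta> i \<Longrightarrow> dual_value - \<epsilon> < F \<alpha> \<beta> \<Longrightarrow>
      \<exists>ya yb. optimal ya yb \<and> sqdist \<alpha> \<beta> ya yb < \<delta> / 2"
    using near_optimal_close_to_optimal by blast
  define e where "e = min \<epsilon> (\<delta> / 2)"
  have e: "0 < e" "e \<le> \<epsilon>" "e \<le> \<delta> / 2" unfolding e_def using \<epsilon> assms by auto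
  obtain T1 where small: "\<And>t. t \<ge> T1 \<Longrightarrow> \<kappa> t \<le> 1" and descent: "\<And>t ya yb. t \<ge> T1 \<Longrightarrow> optimal ya yb \<Longrightarrow>
      sqdist (alpha (Suc t)) (beta (Suc t)) ya yb
        \<le> sqdist (alpha t) (beta t) ya yb - 2 * \<kappa> t * (dual_value - F (alpha t) (beta t)) + \<kappa> t * e"
    using dist_step_optimal[OF e(1)] by blast
  obtain T2 where T2: "T2 \<ge> T1" "dual_value - \<epsilon> < F (alpha T2) (beta T2)"
    using frequently_near_dual_value[OF \<epsilon>] by blast
  \<comment> \<open>Near-optimal values put the iterate within \<delta>/2 of the optimal set; otherwise the distance
    to the optimal point used before does not increase.\<close>
  have "\<exists>ya yb. optimal ya yb \<and> sqdist (alpha t) (beta t) ya yb < \<delta>" if "t \<ge> T2" for t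
    using that
  proof (induction t rule: dec_induct)
    case base
    obtain ya yb where "optimal ya yb" "sqdist (alpha T2) (beta T2) ya yb < \<delta> / 2"
      using near[OF beta_nonneg T2(2)] by blast
    then show ?case using assms by (intro exI[of _ ya] exI[of _ yb] conjI) auto
  next
    case (step t)
    have t: "t \<ge> T1" and \<kappa>: "0 < \<kappa> t" "\<kappa> t \<le> 1" using step.hyps T2(1) small \<kappa>_pos by auto
    have "\<kappa> t * e \<le> e" using \<kappa> e by (simp add: mult_left_le_one_le)
    show ?case
    proof (cases "dual_value - \<epsilon> < F (alpha t) (beta t)")
      case True
      then obtain ya yb where opt: "optimal ya yb" and close: "sqdist (alpha t) (beta t) ya yb < \<delta> / 2"
        using near[OF beta_nonneg] by blast
      have "0 \<le> 2 * \<kappa> t * (dual_value - F (alpha t) (beta t))"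
        using fdual_iterate_le[of t] \<kappa> by simp
      then have "sqdist (alpha (Suc t)) (beta (Suc t)) ya yb < \<delta>"
        using descent[OF t opt] close \<open>\<kappa> t * e \<le> e\<close> e(3) by linarith
      with opt show ?thesis by blast
    next
      case False
      obtain ya yb where opt: "optimal ya yb" and close: "sqdist (alpha t) (beta t) ya yb < \<delta>"
        using step.IH by blast
      have "\<kappa> t * e \<le> \<kappa> t * (2 * (dual_value - F (alpha t) (beta t)))"
        using False e(1,2) \<kappa> by (intro mult_left_mono) auto
      then have "sqdist (alpha (Suc t)) (beta (Suc t)) ya yb < \<delta>"
        using descent[OF t opt] close by (simp add: algebra_simps)
      with opt show ?thesis by blast
    qed
  qed
  then show ?thesis unfolding eventually_sequentially by blast
qed

lemma fdual_iterates_tendsto: "(\<lambda>t. F (alpha t) (beta t)) \<longlonglongrightarrow> dual_value"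
proof (rule order_tendstoI)
  fix a assume "dual_value < a"
  then show "\<forall>\<^sub>F t in sequentially. F (alpha t) (beta t) < a"
    using fdual_iterate_le by (intro always_eventually allI) (rule le_less_trans)
next
  fix a assume "a < dual_value"
  then obtain \<delta> where "0 < \<delta>" and close: "\<And>\<alpha> \<beta> ya yb z. z \<in> Zs n s \<Longrightarrow> F \<alpha> \<beta> = L z \<alpha> \<beta> \<Longrightarrow>
      optimal ya yb \<Longrightarrow> sqdist \<alpha> \<beta> ya yb < \<delta> \<Longrightarrow> dual_value - F \<alpha> \<beta> < dual_value - a"
    using close_to_optimal_near_optimal[of "dual_value - a"] by auto
  show "\<forall>\<^sub>F t in sequentially. a < F (alpha t) (beta t)"
    using eventually_close_to_optimal[OF \<open>0 < \<delta>\<close>]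
  proof eventually_elim
    case (elim t)
    then obtain ya yb where "optimal ya yb" "sqdist (alpha t) (beta t) ya yb < \<delta>" by blast
    then show ?case using close[OF zeta_in_Zs zeta_active] by force
  qed
qed

end

theorem proposition3p4:
  fixes n m k s :: nat
    and Q :: "nat \<Rightarrow> nat \<Rightarrow> real"
    and lam :: "nat \<Rightarrow> real"
    and v :: "nat \<Rightarrow> nat \<Rightarrow> real"
    and c :: "nat \<Rightarrow> real"
    and A :: "nat \<Rightarrow> nat \<Rightarrow> real"
    and b :: "nat \<Rightarrow> real"
    and \<eta> :: real
    and J :: "(nat \<Rightarrow> real) \<Rightarrow> (nat \<Rightarrow> real) \<Rightarrow> nat set"
    and \<kappa> :: "nat \<Rightarrow> real"
    and alpha beta z :: "nat \<Rightarrow> nat \<Rightarrow> real"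
  assumes Q_sym: "\<forall>i<n. \<forall>j<n. Q i j = Q j i"
    and Q_psd: "\<forall>x. 0 \<le> (\<Sum>i<n. \<Sum>j<n. x i * Q i j * x j)"
    and Q_eig: "\<forall>i<n. \<forall>j<n. Q i j = (\<Sum>l<n. lam l * v l i * v l j)"
    and v_orth: "\<forall>l<n. \<forall>l'<n. (\<Sum>j<n. v l j * v l' j) = (if l = l' then 1 else 0)"
    and lam_sorted: "\<forall>i j. i \<le> j \<and> j < n \<longrightarrow> lam j \<le> lam i"
    and lam_nonneg: "\<forall>i<n. 0 \<le> lam i"
    and eta_pos: "0 < \<eta>"
    and s_pos: "0 < s" and s_le: "s \<le> n"
    and k_le: "k \<le> n"
    and J_sel: "\<forall>\<alpha> \<beta>. J \<alpha> \<beta> \<subseteq> {..<n} \<and> card (J \<alpha> \<beta>) = s \<and>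
                  (\<forall>i\<in>J \<alpha> \<beta>. \<forall>j\<in>{..<n} - J \<alpha> \<beta>.
                     \<bar>gam k m lam v A c \<alpha> \<beta> j\<bar> \<le> \<bar>gam k m lam v A c \<alpha> \<beta> i\<bar>)"
    and dual_max: "\<exists>\<alpha>' \<beta>'. (\<alpha>', \<beta>') \<in> dual_feas m \<and>
                  (\<forall>\<alpha> \<beta>. (\<alpha>, \<beta>) \<in> dual_feas m \<longrightarrow>
                     fdual n m k s lam v A b c \<eta> \<alpha> \<beta> \<le> fdual n m k s lam v A b c \<eta> \<alpha>' \<beta>')"
    and kappa_pos: "\<forall>t. 0 < \<kappa> t"
    and kappa_lim: "\<kappa> \<longlonglongrightarrow> 0"
    and kappa_div: "\<not> summable \<kappa>"
    and beta0: "\<forall>i<m. 0 \<le> beta 0 i"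
    and z_def: "\<forall>t. z t = indicator (J (alpha t) (beta t))"
    and alpha_step: "\<forall>t. \<forall>i<k. alpha (Suc t) i =
          (1 - \<kappa> t / 2) * alpha t i
          - \<eta> * \<kappa> t / 2 * sqrt (lam i) *
              (\<Sum>j<n. v i j * z t j * gam k m lam v A c (alpha t) (beta t) j)"
    and beta_step: "\<forall>t. \<forall>i<m. beta (Suc t) i =
          max 0 (beta t i - \<kappa> t * b i
                 - \<eta> * \<kappa> t / 2 *
                     (\<Sum>j<n. A i j * z t j * gam k m lam v A c (alpha t) (beta t) j))"
  shows "(\<lambda>t. fdual n m k s lam v A b c \<eta> (alpha t) (beta t))
            \<longlonglongrightarrow> dval n m k s lam v A b c \<eta>
         \<and> (\<forall>zs. (\<exists>T. \<forall>t\<ge>T. z t = zs) \<longrightarrow>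
               zs \<in> Zs n s
             \<and> inner_val n m k lam v A b c \<eta> zs = Jstar n m k s lam v A b c \<eta>
             \<and> ereal (dval n m k s lam v A b c \<eta>) = Jstar n m k s lam v A b c \<eta>)"
proof -
  \<comment> \<open>The spectral hypotheses on Q only explain where lam and v come from.\<close>
  obtain \<alpha>' \<beta>' where opt: "(\<alpha>', \<beta>') \<in> dual_feas m"
    "\<forall>\<alpha> \<beta>. (\<alpha>, \<beta>) \<in> dual_feas m \<longrightarrow> fdual n m k s lam v A b c \<eta> \<alpha> \<beta> \<le> fdual n m k s lam v A b c \<eta> \<alpha>' \<beta>'"
    using dual_max by blast
  interpret sparse_dual_max n m k s lam v A b c \<eta> \<alpha>' \<beta>'
    by unfold_locales (use eta_pos s_pos opt in \<open>auto simp: dual_feas_def\<close>)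
  have beta_nonneg: "\<forall>i<m. 0 \<le> beta t i" for t
    by (induction t) (use beta0 beta_step in auto)
  have z_Zs: "z t \<in> Zs n s" for t
    using z_def J_sel indicator_in_Zs by auto
  interpret sparse_dual_iteration n m k s lam v A b c \<eta> \<alpha>' \<beta>' alpha beta z \<kappa>
  proof unfold_locales
    show "F (alpha t) (beta t) = L (z t) (alpha t) (beta t)" for t
      unfolding z_def[rule_format] using J_sel by (intro fdual_eq_top_indicator) auto
    show "\<forall>i<k. alpha (Suc t) i = alpha t i + \<kappa> t * grad_a (z t) (alpha t) (beta t) i" for t
      using alpha_step unfolding grad_a_def by (auto simp: algebra_simps)
    show "\<forall>i<m. beta (Suc t) i = max 0 (beta t i + \<kappa> t * grad_b (z t) (alpha t) (beta t) i)" for t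
      using beta_step unfolding grad_b_def by (auto simp: algebra_simps)
  qed (use beta_nonneg z_Zs kappa_pos kappa_lim kappa_div in auto)
  show ?thesis
    unfolding dval_eq_dual_value
  proof (intro conjI allI impI fdual_iterates_tendsto)
    fix zs assume "\<exists>T. \<forall>t\<ge>T. z t = zs"
    then obtain T where T: "\<And>t. t \<ge> T \<Longrightarrow> z t = zs" by blast
    then have "zs \<in> Zs n s" using z_Zs by blast
    moreover have "L zs \<alpha> \<beta> \<le> dual_value" if "\<forall>i<m. 0 \<le> \<beta> i" for \<alpha> \<beta>
      using eventually_constant_pattern_le_dual_value[OF T that] .
    ultimately show "zs \<in> Zs n s"
      "inner_val n m k lam v A b c \<eta> zs = Jstar n m k s lam v A b c \<eta>"
      "ereal dual_value = Jstar n m k s lam v A b c \<eta>"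
      using zero_duality_gap_at by blast+
  qed
qed

end
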